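(* Let $A,B$ be commutative rings with identity, $f:A\to B$ a ring homomorphism and $J$ an ideal of $B$, regarded as an $A$-module via $f$. (a) Assume that $A$ is Cohen–Macaulay in the sense of ideals and that $\operatorname{Kgrade}_A(\mathfrak a,J)\ge\operatorname{ht}\mathfrak a$ for every ideal $\mathfrak a$ of $A$. Then for every ideal $\mathfrak a$ of $A$, $$\operatorname{Kgrade}_{A\bowtie^f J}(\mathfrak a^e,A\bowtie^f J)=\operatorname{Kgrade}_A(\mathfrak a,A)\le\operatorname{Kgrade}_A(\mathfrak a,J).$$ (b) The same holds with "ideal" replaced throughout by "finitely generated ideal": if $A$ is Cohen–Macaulay in the sense of finitely generated ideals and $\operatorname{Kgrade}_A(\mathfrak a,J)\ge\operatorname{ht}\mathfrak a$ for every finitely generated ideal $\mathfrak a$ of $A$, then the displayed relation holds for every finitely generated ideal $\mathfrak a$ of $A$.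
   Context: The amalgamation is the subring $A\bowtie^fJ=\{(a,f(a)+j): a\in A,\ j\in J\}$ of $A\times B$; $\iota_A:A\to A\bowtie^fJ$, $\iota_A(x)=(x,f(x))$, and for an ideal $\mathfrak a$ of $A$, $\mathfrak a^e=\iota_A(\mathfrak a)(A\bowtie^fJ)$. Koszul grade: for a ring $R$, an $R$-module $M$ and a finitely generated ideal $\mathfrak b=(x_1,\dots,x_\ell)$, $\operatorname{Kgrade}_R(\mathfrak b,M)=\inf\{i\ge0: H^i(\operatorname{Hom}_R(\mathbb K_\bullet(x_1,\dots,x_\ell),M))\ne0\}$ ($\inf\emptyset=\infty$), independent of generators; for an arbitrary ideal $\mathfrak a$, $\operatorname{Kgrade}_R(\mathfrak a,M)=\sup$ of $\operatorname{Kgrade}_R(\mathfrak b,M)$ over finitely generated ideals $\mathfrak b\subseteq\mathfrak a$. The height of an ideal $\mathfrak a$ of $R$ is $\operatorname{ht}\mathfrak a=\inf\{\dim R_\mathfrak p:\mathfrak p\in\operatorname{Spec}R,\ \mathfrak a\subseteq\mathfrak p\}$. For a nonempty class $\mathcal C$ of ideals of $R$, $R$ is Cohen–Macaulay in the sense of $\mathcal C$ if $\operatorname{ht}\mathfrak a=\operatorname{Kgrade}_R(\mathfrak a,R)$ for all $\mathfrak a\in\mathcal C$; "in the sense of ideals" (resp. "finitely generated ideals") refers to the class of all (resp. all finitely generated) ideals. *)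

theory Defs
  imports "HOL-Algebra.Algebra" "HOL-Library.Extended_Nat"
begin

definition self_module :: "('a, 'c) ring_scheme \<Rightarrow> ('a, 'a) module" where
  "self_module R = \<lparr>carrier = carrier R, monoid.mult = monoid.mult R, monoid.one = \<one>\<^bsub>R\<^esub>,
     ring.zero = \<zero>\<^bsub>R\<^esub>, ring.add = ring.add R, smult = monoid.mult R\<rparr>"

definition ideal_module_via :: "('a, 'c) ring_scheme \<Rightarrow> ('b, 'd) ring_scheme \<Rightarrow> ('a \<Rightarrow> 'b) \<Rightarrow> 'b set \<Rightarrow> ('a, 'b) module" where
  "ideal_module_via A B f J = \<lparr>carrier = J, monoid.mult = monoid.mult B, monoid.one = \<one>\<^bsub>B\<^esub>,
     ring.zero = \<zero>\<^bsub>B\<^esub>, ring.add = ring.add B, smult = (\<lambda>a j. f a \<otimes>\<^bsub>B\<^esub> j)\<rparr>"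

text \<open>Hom_R(K_i, M) is identified with functions from the i-element subsets of {0..<l}
  to M (extended by zero); the differential is the dual of the Koszul differential
  d(e_T) = sum over j in T of (-1)^(position of j in T) x_j e_(T - {j}).\<close>

definition koszul_cochains :: "('a, 'm, 'd) module_scheme \<Rightarrow> nat \<Rightarrow> nat \<Rightarrow> (nat set \<Rightarrow> 'm) set" where
  "koszul_cochains M l i = {\<phi>. \<forall>T. (T \<subseteq> {0..<l} \<and> card T = i \<longrightarrow> \<phi> T \<in> carrier M)
                                \<and> (\<not> (T \<subseteq> {0..<l} \<and> card T = i) \<longrightarrow> \<phi> T = \<zero>\<^bsub>M\<^esub>)}"

definition koszul_d :: "('a, 'c) ring_scheme \<Rightarrow> ('a, 'm, 'd) module_scheme \<Rightarrow> 'a list \<Rightarrow> nat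
    \<Rightarrow> (nat set \<Rightarrow> 'm) \<Rightarrow> nat set \<Rightarrow> 'm" where
  "koszul_d R M xs i \<phi> T =
     (if T \<subseteq> {0..<length xs} \<and> card T = Suc i then
        (\<Oplus>\<^bsub>M\<^esub> j\<in>T. (if even (card {k\<in>T. k < j}) then xs ! j else \<ominus>\<^bsub>R\<^esub> (xs ! j)) \<odot>\<^bsub>M\<^esub> \<phi> (T - {j}))
      else \<zero>\<^bsub>M\<^esub>)"

definition koszul_cohom_nonzero :: "('a, 'c) ring_scheme \<Rightarrow> ('a, 'm, 'd) module_scheme \<Rightarrow> 'a list \<Rightarrow> nat \<Rightarrow> bool" where
  "koszul_cohom_nonzero R M xs i =
     (\<exists>\<phi>\<in>koszul_cochains M (length xs) i.
        koszul_d R M xs i \<phi> = (\<lambda>T. \<zero>\<^bsub>M\<^esub>) \<and>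
        \<phi> \<notin> (if i = 0 then {\<lambda>T. \<zero>\<^bsub>M\<^esub>}
              else koszul_d R M xs (i - 1) ` koszul_cochains M (length xs) (i - 1)))"

text \<open>Koszul grade of the ideal generated by the list xs (inf of the empty set is infinity).\<close>
definition Kgrade_gens :: "('a, 'c) ring_scheme \<Rightarrow> 'a list \<Rightarrow> ('a, 'm, 'd) module_scheme \<Rightarrow> enat" where
  "Kgrade_gens R xs M = (INF i \<in> {i. koszul_cohom_nonzero R M xs i}. enat i)"

definition Kgrade :: "('a, 'c) ring_scheme \<Rightarrow> 'a set \<Rightarrow> ('a, 'm, 'd) module_scheme \<Rightarrow> enat" where
  "Kgrade R I M = (SUP xs \<in> {xs. set xs \<subseteq> I}. Kgrade_gens R xs M)"

text \<open>dim R_p for a prime p: supremum of lengths n of chains p_0 < ... < p_n = p of primes.\<close>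
definition prime_height :: "('a, 'c) ring_scheme \<Rightarrow> 'a set \<Rightarrow> enat" where
  "prime_height R P = (SUP n \<in> {n. \<exists>c. (\<forall>i\<le>n. primeideal (c i) R) \<and> (\<forall>i<n. c i \<subset> c (Suc i)) \<and> c n = P}. enat n)"

definition height :: "('a, 'c) ring_scheme \<Rightarrow> 'a set \<Rightarrow> enat" where
  "height R I = (INF P \<in> {P. primeideal P R \<and> I \<subseteq> P}. prime_height R P)"

definition finitely_generated_ideal :: "('a, 'c) ring_scheme \<Rightarrow> 'a set \<Rightarrow> bool" where
  "finitely_generated_ideal R I = (ideal I R \<and> (\<exists>S. finite S \<and> S \<subseteq> carrier R \<and> I = genideal R S))"

definition CM_in_sense :: "('a, 'c) ring_scheme \<Rightarrow> ('a set \<Rightarrow> bool) \<Rightarrow> bool" where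
  "CM_in_sense R C = (\<forall>I. C I \<longrightarrow> height R I = Kgrade R I (self_module R))"

definition amalgamation :: "('a, 'c) ring_scheme \<Rightarrow> ('b, 'd) ring_scheme \<Rightarrow> ('a \<Rightarrow> 'b) \<Rightarrow> 'b set \<Rightarrow> ('a \<times> 'b) ring" where
  "amalgamation A B f J = \<lparr>carrier = {(a, f a \<oplus>\<^bsub>B\<^esub> j) | a j. a \<in> carrier A \<and> j \<in> J},
     monoid.mult = (\<lambda>x y. (fst x \<otimes>\<^bsub>A\<^esub> fst y, snd x \<otimes>\<^bsub>B\<^esub> snd y)),
     monoid.one = (\<one>\<^bsub>A\<^esub>, \<one>\<^bsub>B\<^esub>), ring.zero = (\<zero>\<^bsub>A\<^esub>, \<zero>\<^bsub>B\<^esub>),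
 ring.add = (\<lambda>x y. (fst x \<oplus>\<^bsub>A\<^esub> fst y, snd x \<oplus>\<^bsub>B\<^esub> snd y))\<rparr>"

definition amalg_ext :: "('a, 'c) ring_scheme \<Rightarrow> ('b, 'd) ring_scheme \<Rightarrow> ('a \<Rightarrow> 'b) \<Rightarrow> 'b set \<Rightarrow> 'a set \<Rightarrow> ('a \<times> 'b) set" where
  "amalg_ext A B f J I = genideal (amalgamation A B f J) ((\<lambda>x. (x, f x)) ` I)"

end

theory Submission
  imports Defs
begin

text \<open>Over \<open>A \<bowtie>\<^sup>f J\<close>, the Koszul cochain complex of a sequence \<open>\<iota>(x\<^sub>1), \<dots>, \<iota>(x\<^sub>n)\<close> with
  coefficients in \<open>A \<bowtie>\<^sup>f J\<close> is the direct sum of the Koszul complexes of \<open>x\<^sub>1, \<dots>, x\<^sub>n\<close> with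
  coefficients in \<open>A\<close> and in \<open>J\<close>, because \<open>A \<bowtie>\<^sup>f J \<cong> A \<oplus> J\<close> as \<open>A\<close>-modules via
  \<open>(a, f a + j) \<mapsto> (a, j)\<close>. Hence the Koszul grade of a finitely generated ideal \<open>\<iota>(\<bb>)\<close> over
  \<open>A \<bowtie>\<^sup>f J\<close> is \<open>min (Kgrade \<bb> A) (Kgrade \<bb> J)\<close>. Koszul grade only depends on the ideal
  generated (adding a generator lying in the ideal of the others does not change the
  acyclicity range), and every finitely generated subideal of \<open>\<aa>\<^sup>e\<close> lies in some \<open>\<iota>(\<bb>)\<^sup>e\<close> with
  \<open>\<bb> \<subseteq> \<aa>\<close> finitely generated; so \<open>Kgrade \<aa>\<^sup>e (A \<bowtie>\<^sup>f J) = Kgrade \<aa> A\<close> as soon as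
  \<open>Kgrade \<bb> A \<le> Kgrade \<bb> J\<close> for those \<open>\<bb>\<close>. The Cohen--Macaulay hypothesis and the
  hypothesis on \<open>J\<close> give exactly this: \<open>Kgrade \<bb> A = ht \<bb> \<le> Kgrade \<bb> J\<close>.\<close>

section \<open>Koszul cochains indexed by a set of positions\<close>

text \<open>\<open>koszul_d\<close> indexes the generators by \<open>{0..<l}\<close>. Here the generators are a
  function \<open>x :: nat \<Rightarrow> 'a\<close> restricted to an arbitrary finite index set \<open>I\<close>, so that one
  generator can be split off or added at a time; a cochain of degree \<open>i\<close> assigns an
  element of \<open>M\<close> to every \<open>i\<close>-subset of \<open>I\<close> and \<open>\<zero>\<close> to every other set.\<close>

definition cochains :: "('a,'m,'d) module_scheme \<Rightarrow> nat set \<Rightarrow> nat \<Rightarrow> (nat set \<Rightarrow> 'm) set" where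
  "cochains M I i = {\<phi>. \<forall>T. (T \<subseteq> I \<and> card T = i \<longrightarrow> \<phi> T \<in> carrier M)
                            \<and> (\<not> (T \<subseteq> I \<and> card T = i) \<longrightarrow> \<phi> T = \<zero>\<^bsub>M\<^esub>)}"

definition alt_sign :: "('a,'c) ring_scheme \<Rightarrow> bool \<Rightarrow> 'a" where
  "alt_sign R b = (if b then \<one>\<^bsub>R\<^esub> else \<ominus>\<^bsub>R\<^esub> \<one>\<^bsub>R\<^esub>)"

definition kcoef :: "('a,'c) ring_scheme \<Rightarrow> (nat \<Rightarrow> 'a) \<Rightarrow> nat set \<Rightarrow> nat \<Rightarrow> 'a" where
  "kcoef R x T j = alt_sign R (even (card {k\<in>T. k < j})) \<otimes>\<^bsub>R\<^esub> x j"

definition kdiff :: "('a,'c) ring_scheme \<Rightarrow> ('a,'m,'d) module_scheme \<Rightarrow> (nat \<Rightarrow> 'a) \<Rightarrow> nat set \<Rightarrow> nat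
    \<Rightarrow> (nat set \<Rightarrow> 'm) \<Rightarrow> nat set \<Rightarrow> 'm" where
  "kdiff R M x I i \<phi> T =
     (if T \<subseteq> I \<and> card T = Suc i then (\<Oplus>\<^bsub>M\<^esub> j\<in>T. kcoef R x T j \<odot>\<^bsub>M\<^esub> \<phi> (T - {j})) else \<zero>\<^bsub>M\<^esub>)"

definition cadd :: "('a,'m,'d) module_scheme \<Rightarrow> (nat set \<Rightarrow> 'm) \<Rightarrow> (nat set \<Rightarrow> 'm) \<Rightarrow> nat set \<Rightarrow> 'm" where
  "cadd M \<phi> \<psi> = (\<lambda>T. \<phi> T \<oplus>\<^bsub>M\<^esub> \<psi> T)"

definition csmult :: "('a,'m,'d) module_scheme \<Rightarrow> 'a \<Rightarrow> (nat set \<Rightarrow> 'm) \<Rightarrow> nat set \<Rightarrow> 'm" where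
  "csmult M r \<phi> = (\<lambda>T. r \<odot>\<^bsub>M\<^esub> \<phi> T)"

definition czero :: "('a,'m,'d) module_scheme \<Rightarrow> nat set \<Rightarrow> 'm" where
  "czero M = (\<lambda>T. \<zero>\<^bsub>M\<^esub>)"

definition coboundaries where
  "coboundaries R M x I i = (if i = 0 then {czero M} else kdiff R M x I (i - 1) ` cochains M I (i - 1))"

definition cohom_nonzero where
  "cohom_nonzero R M x I i =
     (\<exists>\<phi>\<in>cochains M I i. kdiff R M x I i \<phi> = czero M \<and> \<phi> \<notin> coboundaries R M x I i)"

definition acyclic_below where
  "acyclic_below R M x I n = (\<forall>i<n. \<not> cohom_nonzero R M x I i)"

lemma coboundaries_0: "coboundaries R M x I 0 = {czero M}"
  by (simp add: coboundaries_def)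

lemma coboundaries_pos: "i \<noteq> 0 \<Longrightarrow> coboundaries R M x I i = kdiff R M x I (i - 1) ` cochains M I (i - 1)"
  by (simp add: coboundaries_def)

lemma acyclic_belowD:
  "acyclic_below R M x I n \<Longrightarrow> i < n \<Longrightarrow> \<alpha> \<in> cochains M I i \<Longrightarrow> kdiff R M x I i \<alpha> = czero M
    \<Longrightarrow> \<alpha> \<in> coboundaries R M x I i"
  by (auto simp: acyclic_below_def cohom_nonzero_def)

lemma acyclic_belowI:
  "(\<And>i \<alpha>. i < n \<Longrightarrow> \<alpha> \<in> cochains M I i \<Longrightarrow> kdiff R M x I i \<alpha> = czero M
      \<Longrightarrow> \<alpha> \<in> coboundaries R M x I i) \<Longrightarrow> acyclic_below R M x I n"
  by (auto simp: acyclic_below_def cohom_nonzero_def)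

lemma cochainsI:
  "(\<And>T. \<phi> T \<in> carrier M) \<Longrightarrow> (\<And>T. \<not> (T \<subseteq> I \<and> card T = i) \<Longrightarrow> \<phi> T = \<zero>\<^bsub>M\<^esub>) \<Longrightarrow> \<phi> \<in> cochains M I i"
  by (simp add: cochains_def)

lemma cochains_zeroD: "\<phi> \<in> cochains M I i \<Longrightarrow> \<not> (T \<subseteq> I \<and> card T = i) \<Longrightarrow> \<phi> T = \<zero>\<^bsub>M\<^esub>"
  by (simp add: cochains_def)

lemma kdiff_in:
  "T \<subseteq> I \<Longrightarrow> card T = Suc i \<Longrightarrow> kdiff R M x I i \<phi> T = (\<Oplus>\<^bsub>M\<^esub> j\<in>T. kcoef R x T j \<odot>\<^bsub>M\<^esub> \<phi> (T - {j}))"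
  by (simp add: kdiff_def)

lemma kdiff_out: "\<not> (T \<subseteq> I \<and> card T = Suc i) \<Longrightarrow> kdiff R M x I i \<phi> T = \<zero>\<^bsub>M\<^esub>"
  unfolding kdiff_def by auto

lemma kdiff_empty: "kdiff R M x {} i \<phi> = czero M"
  by (auto simp: fun_eq_iff czero_def intro!: kdiff_out)

lemma cohom_nonzero_transfer:
  assumes nz: "cohom_nonzero R M x I i"
    and F: "\<And>j \<phi>. \<phi> \<in> cochains M I j \<Longrightarrow> F \<phi> \<in> cochains M' I' j"
    and G: "\<And>j \<psi>. \<psi> \<in> cochains M' I' j \<Longrightarrow> G \<psi> \<in> cochains M I j"
    and GF: "\<And>j \<phi>. \<phi> \<in> cochains M I j \<Longrightarrow> G (F \<phi>) = \<phi>"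
    and F_kdiff: "\<And>j \<phi>. \<phi> \<in> cochains M I j \<Longrightarrow> F (kdiff R M x I j \<phi>) = kdiff R' M' x' I' j (F \<phi>)"
    and G_kdiff: "\<And>j \<psi>. \<psi> \<in> cochains M' I' j \<Longrightarrow> G (kdiff R' M' x' I' j \<psi>) = kdiff R M x I j (G \<psi>)"
    and F0: "F (czero M) = czero M'" and G0: "G (czero M') = czero M"
  shows "cohom_nonzero R' M' x' I' i"
proof -
  obtain \<phi> where \<phi>: "\<phi> \<in> cochains M I i" and d\<phi>: "kdiff R M x I i \<phi> = czero M"
    and nb: "\<phi> \<notin> coboundaries R M x I i"
    using nz by (auto simp: cohom_nonzero_def)
  have "F \<phi> \<notin> coboundaries R' M' x' I' i"
  proof
    assume b: "F \<phi> \<in> coboundaries R' M' x' I' i"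
    show False
    proof (cases "i = 0")
      case True
      then have "\<phi> = czero M" using b GF[OF \<phi>] G0 by (simp add: coboundaries_0)
      then show False using nb True by (simp add: coboundaries_0)
    next
      case False
      then obtain \<psi> where \<psi>: "\<psi> \<in> cochains M' I' (i - 1)" and e: "F \<phi> = kdiff R' M' x' I' (i - 1) \<psi>"
        using b by (auto simp: coboundaries_pos)
      have "\<phi> = kdiff R M x I (i - 1) (G \<psi>)" using GF[OF \<phi>] e G_kdiff[OF \<psi>] by simp
      then show False using nb G[OF \<psi>] False by (auto simp: coboundaries_pos)
    qed
  qed
  then show ?thesis using F[OF \<phi>] F_kdiff[OF \<phi>] d\<phi> F0 by (auto simp: cohom_nonzero_def)
qed

context module
begin

lemma cochains_carrier: "\<phi> \<in> cochains M I i \<Longrightarrow> \<phi> T \<in> carrier M"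
  by (cases "T \<subseteq> I \<and> card T = i") (auto simp: cochains_def)

lemma czero_cochains[simp]: "czero M \<in> cochains M I i"
  by (simp add: cochains_def czero_def)

lemma cadd_cochains[simp]: "\<phi> \<in> cochains M I i \<Longrightarrow> \<psi> \<in> cochains M I i \<Longrightarrow> cadd M \<phi> \<psi> \<in> cochains M I i"
  by (auto simp: cochains_def cadd_def)

lemma csmult_cochains[simp]: "r \<in> carrier R \<Longrightarrow> \<phi> \<in> cochains M I i \<Longrightarrow> csmult M r \<phi> \<in> cochains M I i"
  by (auto simp: cochains_def csmult_def)

lemma cadd_czero_left: "\<phi> \<in> cochains M I i \<Longrightarrow> cadd M (czero M) \<phi> = \<phi>"
  using cochains_carrier by (auto simp: cadd_def czero_def)

lemma cadd_czero_right: "\<phi> \<in> cochains M I i \<Longrightarrow> cadd M \<phi> (czero M) = \<phi>"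
  using cochains_carrier by (auto simp: cadd_def czero_def)

lemma csmult_czero[simp]: "r \<in> carrier R \<Longrightarrow> csmult M r (czero M) = czero M"
  by (auto simp: csmult_def czero_def)

lemma cadd_csmult_minus_one: "\<phi> \<in> cochains M I i \<Longrightarrow> cadd M \<phi> (csmult M (\<ominus> \<one>) \<phi>) = czero M"
  using cochains_carrier by (auto simp: cadd_def csmult_def czero_def fun_eq_iff smult_l_minus M.r_neg)

lemma cadd_comm: "\<phi> \<in> cochains M I i \<Longrightarrow> \<psi> \<in> cochains M I' i' \<Longrightarrow> cadd M \<phi> \<psi> = cadd M \<psi> \<phi>"
  using cochains_carrier by (auto simp: cadd_def fun_eq_iff M.a_comm)

lemma csmult_csmult:
  "r \<in> carrier R \<Longrightarrow> s \<in> carrier R \<Longrightarrow> \<phi> \<in> cochains M I i \<Longrightarrow> csmult M r (csmult M s \<phi>) = csmult M (r \<otimes> s) \<phi>"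
  using cochains_carrier by (auto simp: csmult_def fun_eq_iff smult_assoc1)

lemma csmult_one: "\<phi> \<in> cochains M I i \<Longrightarrow> csmult M \<one> \<phi> = \<phi>"
  using cochains_carrier by (auto simp: csmult_def fun_eq_iff)

lemma csmult_add_distrib:
  "r \<in> carrier R \<Longrightarrow> s \<in> carrier R \<Longrightarrow> \<phi> \<in> cochains M I i
    \<Longrightarrow> csmult M (r \<oplus> s) \<phi> = cadd M (csmult M r \<phi>) (csmult M s \<phi>)"
  using cochains_carrier by (auto simp: csmult_def cadd_def fun_eq_iff smult_l_distr)

lemma eq_if_cadd_minus_eq_czero:
  assumes "\<phi> \<in> cochains M I i" "\<psi> \<in> cochains M I' i'" "cadd M \<phi> (csmult M (\<ominus> \<one>) \<psi>) = czero M"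
  shows "\<phi> = \<psi>"
proof
  fix T
  have "\<phi> T \<oplus>\<^bsub>M\<^esub> \<ominus>\<^bsub>M\<^esub> \<psi> T = \<zero>\<^bsub>M\<^esub>"
    using fun_cong[OF assms(3), of T] cochains_carrier[OF assms(2)]
    by (simp add: cadd_def csmult_def czero_def smult_l_minus)
  then show "\<phi> T = \<psi> T" using cochains_carrier[OF assms(1)] cochains_carrier[OF assms(2)]
    by (metis M.add.inv_closed M.add.inv_inv M.minus_equality)
qed

lemma eq_csmult_minus_one_if_cadd_eq_czero:
  assumes "\<phi> \<in> cochains M I i" "\<psi> \<in> cochains M I' i'" "cadd M \<phi> \<psi> = czero M"
  shows "\<phi> = csmult M (\<ominus> \<one>) \<psi>"
proof (rule eq_if_cadd_minus_eq_czero[OF assms(1) csmult_cochains[OF _ assms(2)]])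
  show "cadd M \<phi> (csmult M (\<ominus> \<one>) (csmult M (\<ominus> \<one>) \<psi>)) = czero M"
    using assms(3) csmult_csmult[OF _ _ assms(2), of "\<ominus> \<one>" "\<ominus> \<one>"]
    by (simp add: R.l_minus R.r_minus csmult_one[OF assms(2)])
qed simp

lemma cadd_cadd_minus_cancel:
  assumes "\<phi> \<in> cochains M I i" "\<psi> \<in> cochains M I' i'"
  shows "cadd M \<psi> (cadd M \<phi> (csmult M (\<ominus> \<one>) \<psi>)) = \<phi>"
proof
  fix T
  have a: "\<phi> T \<in> carrier M" "\<psi> T \<in> carrier M"
    using cochains_carrier[OF assms(1)] cochains_carrier[OF assms(2)] by auto
  then show "cadd M \<psi> (cadd M \<phi> (csmult M (\<ominus> \<one>) \<psi>)) T = \<phi> T"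
    by (simp add: cadd_def csmult_def smult_l_minus M.a_lcomm M.r_neg)
qed

lemma alt_sign_closed[simp]: "alt_sign R b \<in> carrier R"
  by (simp add: alt_sign_def)

lemma alt_sign_True[simp]: "alt_sign R True = \<one>"
  by (simp add: alt_sign_def)

lemma alt_sign_False: "alt_sign R False = \<ominus> \<one>"
  by (simp add: alt_sign_def)

lemma alt_sign_mult: "alt_sign R a \<otimes> alt_sign R b = alt_sign R (a = b)"
  unfolding alt_sign_def by (cases a; cases b; simp; algebra)

lemma alt_sign_mult_assoc: "y \<in> carrier R \<Longrightarrow> alt_sign R a \<otimes> (alt_sign R b \<otimes> y) = alt_sign R (a = b) \<otimes> y"
  by (simp add: R.m_assoc[symmetric] alt_sign_mult)

lemma alt_sign_mult_commute: "y \<in> carrier R \<Longrightarrow> (alt_sign R b \<otimes> y) \<otimes> alt_sign R c = alt_sign R (b = c) \<otimes> y"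
  by (simp add: R.m_assoc R.m_comm[of y] alt_sign_mult_assoc)

lemma alt_sign_smult_twice: "m \<in> carrier M \<Longrightarrow> alt_sign R b \<odot>\<^bsub>M\<^esub> (alt_sign R b \<odot>\<^bsub>M\<^esub> m) = m"
  by (simp add: smult_assoc1[symmetric] alt_sign_mult)

end

locale koszul_seq = module R M for R (structure) and M (structure) +
  fixes x :: "nat \<Rightarrow> 'a"
  assumes x_closed[simp]: "x j \<in> carrier R"
begin

lemma kcoef_closed[simp]: "kcoef R x T j \<in> carrier R"
  by (simp add: kcoef_def)

lemma kdiff_cochains[simp]:
  assumes "\<phi> \<in> cochains M I i"
  shows "kdiff R M x I i \<phi> \<in> cochains M I (Suc i)"
  unfolding cochains_def kdiff_def using cochains_carrier[OF assms] by (auto intro!: M.finsum_closed)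

lemma kdiff_cong:
  assumes "\<And>j. j \<in> I \<Longrightarrow> x j = y j" "\<phi> \<in> cochains M I i"
  shows "kdiff R M x I i \<phi> = kdiff R M y I i \<phi>"
proof
  fix T
  show "kdiff R M x I i \<phi> T = kdiff R M y I i \<phi> T"
    unfolding kdiff_def kcoef_def using assms cochains_carrier[OF assms(2)]
    by (auto intro!: M.finsum_cong' simp flip: assms(1))
qed

lemma kdiff_czero[simp]: "kdiff R M x I i (czero M) = czero M"
  by (auto simp: kdiff_def czero_def fun_eq_iff M.finsum_zero intro!: M.finsum_cong)

lemma kdiff_cadd:
  assumes "\<phi> \<in> cochains M I i" "\<psi> \<in> cochains M I i"
  shows "kdiff R M x I i (cadd M \<phi> \<psi>) = cadd M (kdiff R M x I i \<phi>) (kdiff R M x I i \<psi>)"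
proof
  fix T
  note c = cochains_carrier[OF assms(1)] cochains_carrier[OF assms(2)]
  have "(\<Oplus>\<^bsub>M\<^esub>j\<in>T. kcoef R x T j \<odot>\<^bsub>M\<^esub> (\<phi> (T - {j}) \<oplus>\<^bsub>M\<^esub> \<psi> (T - {j})))
      = (\<Oplus>\<^bsub>M\<^esub>j\<in>T. kcoef R x T j \<odot>\<^bsub>M\<^esub> \<phi> (T - {j}) \<oplus>\<^bsub>M\<^esub> kcoef R x T j \<odot>\<^bsub>M\<^esub> \<psi> (T - {j}))"
    by (rule M.finsum_cong') (auto simp: c smult_r_distr)
  also have "\<dots> = (\<Oplus>\<^bsub>M\<^esub>j\<in>T. kcoef R x T j \<odot>\<^bsub>M\<^esub> \<phi> (T - {j}))
      \<oplus>\<^bsub>M\<^esub> (\<Oplus>\<^bsub>M\<^esub>j\<in>T. kcoef R x T j \<odot>\<^bsub>M\<^esub> \<psi> (T - {j}))"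
    by (rule M.finsum_addf) (auto simp: c)
  finally show "kdiff R M x I i (cadd M \<phi> \<psi>) T = cadd M (kdiff R M x I i \<phi>) (kdiff R M x I i \<psi>) T"
    by (simp add: kdiff_def cadd_def)
qed

lemma kdiff_csmult:
  assumes "\<phi> \<in> cochains M I i" "r \<in> carrier R"
  shows "kdiff R M x I i (csmult M r \<phi>) = csmult M r (kdiff R M x I i \<phi>)"
proof
  fix T
  note c = cochains_carrier[OF assms(1)]
  show "kdiff R M x I i (csmult M r \<phi>) T = csmult M r (kdiff R M x I i \<phi>) T"
  proof (cases "T \<subseteq> I \<and> card T = Suc i")
    case True
    then have "finite T" by (simp add: card_ge_0_finite)
    have "(\<Oplus>\<^bsub>M\<^esub>j\<in>T. kcoef R x T j \<odot>\<^bsub>M\<^esub> (r \<odot>\<^bsub>M\<^esub> \<phi> (T - {j})))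
        = (\<Oplus>\<^bsub>M\<^esub>j\<in>T. r \<odot>\<^bsub>M\<^esub> (kcoef R x T j \<odot>\<^bsub>M\<^esub> \<phi> (T - {j})))"
      by (rule M.finsum_cong') (auto simp: c assms(2) smult_assoc1[symmetric] R.m_comm)
    also have "\<dots> = r \<odot>\<^bsub>M\<^esub> (\<Oplus>\<^bsub>M\<^esub>j\<in>T. kcoef R x T j \<odot>\<^bsub>M\<^esub> \<phi> (T - {j}))"
      using \<open>finite T\<close> by (intro finsum_smult_ldistr[symmetric]) (auto simp: c assms(2))
    finally show ?thesis using True by (simp add: kdiff_def csmult_def)
  qed (auto simp: kdiff_def csmult_def assms(2))
qed

lemma czero_coboundaries[simp]: "czero M \<in> coboundaries R M x I i"
  by (cases "i = 0") (auto simp: coboundaries_0 coboundaries_pos intro!: image_eqI[where x="czero M"])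

lemma coboundaries_cadd:
  assumes "\<phi> \<in> coboundaries R M x I i" "\<psi> \<in> coboundaries R M x I i"
  shows "cadd M \<phi> \<psi> \<in> coboundaries R M x I i"
proof (cases "i = 0")
  case False
  then obtain a b where a: "a \<in> cochains M I (i - 1)" "\<phi> = kdiff R M x I (i - 1) a"
    and b: "b \<in> cochains M I (i - 1)" "\<psi> = kdiff R M x I (i - 1) b"
    using assms by (auto simp: coboundaries_pos)
  then have "cadd M \<phi> \<psi> = kdiff R M x I (i - 1) (cadd M a b)" by (simp add: kdiff_cadd)
  then show ?thesis using a b False by (simp add: coboundaries_pos)
qed (use assms in \<open>simp add: coboundaries_0 cadd_czero_left\<close>)

lemma coboundaries_csmult:
  assumes "r \<in> carrier R" "\<phi> \<in> coboundaries R M x I i"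
  shows "csmult M r \<phi> \<in> coboundaries R M x I i"
proof (cases "i = 0")
  case False
  then obtain a where a: "a \<in> cochains M I (i - 1)" "\<phi> = kdiff R M x I (i - 1) a"
    using assms by (auto simp: coboundaries_pos)
  then have "csmult M r \<phi> = kdiff R M x I (i - 1) (csmult M r a)" using assms(1) by (simp add: kdiff_csmult)
  then show ?thesis using a assms(1) False by (simp add: coboundaries_pos)
qed (use assms in \<open>simp add: coboundaries_0\<close>)

end

section \<open>Splitting off one generator\<close>

lemma card_less_insert:
  assumes "finite T" "(k::nat) \<notin> T"
  shows "card {m\<in>insert k T. m < j} = card {m\<in>T. m < j} + (if k < j then 1 else 0)"
proof -
  have "{m\<in>insert k T. m < j} = (if k < j then insert k {m\<in>T. m < j} else {m\<in>T. m < j})" by auto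
  then show ?thesis using assms by auto
qed

lemma card_greater_remove:
  assumes "finite T" "j \<in> T" "(j::nat) \<noteq> k"
  shows "card {m\<in>T. k < m} = card {m\<in>T - {j}. k < m} + (if k < j then 1 else 0)"
proof (cases "k < j")
  case True
  then have "{m\<in>T. k < m} = insert j {m\<in>T - {j}. k < m}" using assms(2) by blast
  then show ?thesis using assms(1) True by simp
next
  case False
  then have "{m\<in>T. k < m} = {m\<in>T - {j}. k < m}" by blast
  then show ?thesis using False by simp
qed

lemma card_less_add_card_greater:
  assumes "finite T" "(k::nat) \<notin> T"
  shows "card {m\<in>T. m < k} + card {m\<in>T. k < m} = card T"
proof -
  have "m < k \<or> k < m" if "m \<in> T" for m using that assms(2) by (metis linorder_neqE_nat)
  then have "T = {m\<in>T. m < k} \<union> {m\<in>T. k < m}" by blast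
  moreover have "card ({m\<in>T. m < k} \<union> {m\<in>T. k < m}) = card {m\<in>T. m < k} + card {m\<in>T. k < m}"
    by (rule card_Un_disjoint) (use assms(1) in \<open>simp_all add: disjoint_iff\<close>)
  ultimately show ?thesis by simp
qed

definition even_above :: "nat \<Rightarrow> nat set \<Rightarrow> bool" where
  "even_above k T = even (card {m\<in>T. k < m})"

lemma even_above_swap:
  assumes "finite T" "k \<notin> T" "j \<in> T"
  shows "(even_above k T = even (card {m\<in>insert k T. m < j}))
       = (even (card {m\<in>T. m < j}) = even_above k (T - {j}))"
proof -
  have jk: "j \<noteq> k" using assms by blast
  show ?thesis
    using card_less_insert[OF assms(1,2), of j] card_greater_remove[OF assms(1,3) jk]
    by (cases "k < j") (auto simp: even_above_def)
qed

lemma even_above_insert_self: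
  assumes "finite T" "k \<notin> T"
  shows "(even_above k T = even (card {m\<in>insert k T. m < k})) = even (card T)"
proof -
  have "card {m\<in>insert k T. m < k} = card {m\<in>T. m < k}" using card_less_insert[OF assms, of k] by simp
  then show ?thesis unfolding even_above_def card_less_add_card_greater[OF assms, symmetric] by auto
qed

text \<open>A cochain on \<open>I\<close> splits into its values on subsets avoiding \<open>k\<close> and, up to sign, its
  values on subsets containing \<open>k\<close>; \<open>glue\<close> is the inverse. With the signs chosen here the
  Koszul complex on \<open>I\<close> becomes the mapping cone of multiplication by \<open>\<plusminus>x k\<close> on the complex
  on \<open>I - {k}\<close>, see \<open>part_without_kdiff\<close> and \<open>part_with_kdiff\<close>.\<close>

definition part_without :: "('a,'m,'d) module_scheme \<Rightarrow> nat set \<Rightarrow> nat \<Rightarrow> (nat set \<Rightarrow> 'm) \<Rightarrow> nat set \<Rightarrow> 'm" where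
  "part_without M I k \<phi> = (\<lambda>T. if T \<subseteq> I - {k} then \<phi> T else \<zero>\<^bsub>M\<^esub>)"

definition part_with :: "('a,'c) ring_scheme \<Rightarrow> ('a,'m,'d) module_scheme \<Rightarrow> nat set \<Rightarrow> nat
    \<Rightarrow> (nat set \<Rightarrow> 'm) \<Rightarrow> nat set \<Rightarrow> 'm" where
  "part_with R M I k \<phi> =
     (\<lambda>T. if T \<subseteq> I - {k} then alt_sign R (even_above k T) \<odot>\<^bsub>M\<^esub> \<phi> (insert k T) else \<zero>\<^bsub>M\<^esub>)"

definition glue :: "('a,'c) ring_scheme \<Rightarrow> ('a,'m,'d) module_scheme \<Rightarrow> nat set \<Rightarrow> nat
    \<Rightarrow> (nat set \<Rightarrow> 'm) \<Rightarrow> (nat set \<Rightarrow> 'm) \<Rightarrow> nat set \<Rightarrow> 'm" where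
  "glue R M I k \<alpha> \<beta> = (\<lambda>T. if T \<subseteq> I
      then (if k \<in> T then alt_sign R (even_above k (T - {k})) \<odot>\<^bsub>M\<^esub> \<beta> (T - {k}) else \<alpha> T)
      else \<zero>\<^bsub>M\<^esub>)"

locale koszul_split = koszul_seq +
  fixes I :: "nat set" and k :: nat
  assumes finite_I: "finite I" and k_in_I: "k \<in> I"
begin

abbreviation "I' \<equiv> I - {k}"

lemma finite_subset_I': "T \<subseteq> I' \<Longrightarrow> finite T"
  using finite_I finite_subset by blast

lemma part_without_cochains[simp]: "\<phi> \<in> cochains M I i \<Longrightarrow> part_without M I k \<phi> \<in> cochains M I' i"
  by (auto simp: cochains_def part_without_def)

lemma part_with_cochains:
  assumes "\<phi> \<in> cochains M I i"
  shows "part_with R M I k \<phi> \<in> cochains M I' (i - 1)"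
proof (rule cochainsI)
  fix T
  show "part_with R M I k \<phi> T \<in> carrier M"
    using cochains_carrier[OF assms] by (simp add: part_with_def)
  assume T: "\<not> (T \<subseteq> I' \<and> card T = i - 1)"
  show "part_with R M I k \<phi> T = \<zero>\<^bsub>M\<^esub>"
  proof (cases "T \<subseteq> I'")
    case True
    have "k \<notin> T" using True by blast
    then have "card (insert k T) = Suc (card T)" using finite_subset_I'[OF True] by simp
    then have "card (insert k T) \<noteq> i" using T True by auto
    then have "\<phi> (insert k T) = \<zero>\<^bsub>M\<^esub>" by (intro cochains_zeroD[OF assms]) simp
    then show ?thesis using True by (simp add: part_with_def)
  qed (simp add: part_with_def)
qed

lemma part_with_degree_0:
  assumes "\<phi> \<in> cochains M I 0"
  shows "part_with R M I k \<phi> = czero M"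
proof -
  have "\<phi> (insert k T) = \<zero>\<^bsub>M\<^esub>" if "T \<subseteq> I'" for T
    using that finite_subset_I'[OF that] by (intro cochains_zeroD[OF assms]) auto
  then show ?thesis by (auto simp: part_with_def czero_def)
qed

lemma glue_cochains[simp]:
  assumes \<alpha>: "\<alpha> \<in> cochains M I' i" and \<beta>: "\<beta> \<in> cochains M I' (i - 1)" and "i = 0 \<longrightarrow> \<beta> = czero M"
  shows "glue R M I k \<alpha> \<beta> \<in> cochains M I i"
proof (rule cochainsI)
  fix T
  show "glue R M I k \<alpha> \<beta> T \<in> carrier M"
    using cochains_carrier[OF \<alpha>] cochains_carrier[OF \<beta>] by (simp add: glue_def)
  assume T: "\<not> (T \<subseteq> I \<and> card T = i)"
  consider "\<not> T \<subseteq> I" | "T \<subseteq> I" "k \<notin> T" | "T \<subseteq> I" "k \<in> T" by blast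
  then show "glue R M I k \<alpha> \<beta> T = \<zero>\<^bsub>M\<^esub>"
  proof cases
    case 2
    then show ?thesis using T cochains_zeroD[OF \<alpha>, of T] by (auto simp: glue_def)
  next
    case 3
    have "\<beta> (T - {k}) = \<zero>\<^bsub>M\<^esub>"
    proof (cases "i = 0")
      case False
      have "card T = Suc (card (T - {k}))"
        using 3 finite_I finite_subset by (intro card.remove) auto
      then show ?thesis using T 3 False by (intro cochains_zeroD[OF \<beta>]) auto
    qed (use assms(3) in \<open>simp add: czero_def\<close>)
    then show ?thesis using 3 by (simp add: glue_def)
  qed (simp add: glue_def)
qed

lemma part_without_glue[simp]:
  assumes "\<alpha> \<in> cochains M I' i"
  shows "part_without M I k (glue R M I k \<alpha> \<beta>) = \<alpha>"
proof
  fix T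
  show "part_without M I k (glue R M I k \<alpha> \<beta>) T = \<alpha> T"
    using cochains_zeroD[OF assms, of T] by (auto simp: part_without_def glue_def)
qed

lemma part_with_glue[simp]: "\<beta> \<in> cochains M I' j \<Longrightarrow> part_with R M I k (glue R M I k \<alpha> \<beta>) = \<beta>"
proof
  fix T assume \<beta>: "\<beta> \<in> cochains M I' j"
  show "part_with R M I k (glue R M I k \<alpha> \<beta>) T = \<beta> T"
  proof (cases "T \<subseteq> I'")
    case True
    then have "insert k T - {k} = T" "insert k T \<subseteq> I" using k_in_I by auto
    then show ?thesis
      using True by (simp add: part_with_def glue_def alt_sign_smult_twice cochains_carrier[OF \<beta>])
  qed (use cochains_zeroD[OF \<beta>] in \<open>auto simp: part_with_def\<close>)
qed

lemma glue_parts: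
  assumes \<phi>: "\<phi> \<in> cochains M I i"
  shows "glue R M I k (part_without M I k \<phi>) (part_with R M I k \<phi>) = \<phi>"
proof
  fix T
  have "insert k (T - {k}) = T" "T - {k} \<subseteq> I'" if "T \<subseteq> I" "k \<in> T" using that by auto
  then show "glue R M I k (part_without M I k \<phi>) (part_with R M I k \<phi>) T = \<phi> T"
    using cochains_zeroD[OF \<phi>, of T]
    by (auto simp: part_with_def part_without_def glue_def alt_sign_smult_twice cochains_carrier[OF \<phi>])
qed

lemma cochains_eq_if_parts_eq:
  assumes "\<phi> \<in> cochains M I i" "\<psi> \<in> cochains M I i"
    and "part_without M I k \<phi> = part_without M I k \<psi>" "part_with R M I k \<phi> = part_with R M I k \<psi>"
  shows "\<phi> = \<psi>"
  using glue_parts[OF assms(1)] glue_parts[OF assms(2)] assms(3,4) by metis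

lemma part_without_czero[simp]: "part_without M I k (czero M) = czero M"
  by (auto simp: part_without_def czero_def)

lemma part_with_czero[simp]: "part_with R M I k (czero M) = czero M"
  by (auto simp: part_with_def czero_def)

lemma part_without_cadd: "part_without M I k (cadd M \<phi> \<psi>) = cadd M (part_without M I k \<phi>) (part_without M I k \<psi>)"
  by (auto simp: part_without_def cadd_def)

lemma part_without_csmult:
  "r \<in> carrier R \<Longrightarrow> part_without M I k (csmult M r \<phi>) = csmult M r (part_without M I k \<phi>)"
  by (auto simp: part_without_def csmult_def)

lemma part_with_csmult:
  assumes "\<phi> \<in> cochains M I i" "r \<in> carrier R"
  shows "part_with R M I k (csmult M r \<phi>) = csmult M r (part_with R M I k \<phi>)"
  using cochains_carrier[OF assms(1)] assms(2)
  by (auto simp: part_with_def csmult_def smult_assoc1[symmetric] R.m_comm)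

lemma part_without_kdiff:
  assumes "\<phi> \<in> cochains M I i"
  shows "part_without M I k (kdiff R M x I i \<phi>) = kdiff R M x I' i (part_without M I k \<phi>)"
proof
  fix T
  have "(\<Oplus>\<^bsub>M\<^esub> j\<in>T. kcoef R x T j \<odot>\<^bsub>M\<^esub> \<phi> (T - {j}))
      = (\<Oplus>\<^bsub>M\<^esub> j\<in>T. kcoef R x T j \<odot>\<^bsub>M\<^esub> part_without M I k \<phi> (T - {j}))" if "T \<subseteq> I'"
    using that cochains_carrier[OF assms] by (intro M.finsum_cong') (auto simp: part_without_def)
  then show "part_without M I k (kdiff R M x I i \<phi>) T = kdiff R M x I' i (part_without M I k \<phi>) T"
    by (auto simp: part_without_def kdiff_def)
qed

lemma kcoef_part_with:
  assumes "T \<subseteq> I'" "j \<in> T"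
  shows "alt_sign R (even_above k T) \<otimes> kcoef R x (insert k T) j
       = kcoef R x T j \<otimes> alt_sign R (even_above k (T - {j}))"
proof -
  have "k \<notin> T" using assms(1) by blast
  note swap = even_above_swap[OF finite_subset_I'[OF assms(1)] this assms(2)]
  show ?thesis
    by (simp only: kcoef_def alt_sign_mult_assoc[OF x_closed] alt_sign_mult_commute[OF x_closed] swap)
qed

lemma kcoef_part_with_self:
  assumes "T \<subseteq> I'" "card T = i"
  shows "alt_sign R (even_above k T) \<otimes> kcoef R x (insert k T) k = alt_sign R (even i) \<otimes> x k"
proof -
  have "k \<notin> T" using assms(1) by blast
  note self = even_above_insert_self[OF finite_subset_I'[OF assms(1)] this]
  show ?thesis by (simp only: kcoef_def alt_sign_mult_assoc[OF x_closed] self assms(2))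
qed

lemma kdiff_insert:
  assumes \<phi>: "\<phi> \<in> cochains M I i" and T: "T \<subseteq> I'" "card T = i"
  shows "kdiff R M x I i \<phi> (insert k T) = kcoef R x (insert k T) k \<odot>\<^bsub>M\<^esub> \<phi> T
           \<oplus>\<^bsub>M\<^esub> (\<Oplus>\<^bsub>M\<^esub> j\<in>T. kcoef R x (insert k T) j \<odot>\<^bsub>M\<^esub> \<phi> (insert k (T - {j})))"
proof -
  have fT: "finite T" and kT: "k \<notin> T" using T finite_subset_I' by auto
  have "insert k T \<subseteq> I" "card (insert k T) = Suc i" using T fT kT k_in_I by auto
  then have "kdiff R M x I i \<phi> (insert k T)
      = (\<Oplus>\<^bsub>M\<^esub> j\<in>insert k T. kcoef R x (insert k T) j \<odot>\<^bsub>M\<^esub> \<phi> (insert k T - {j}))"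
    by (rule kdiff_in)
  also have "\<dots> = kcoef R x (insert k T) k \<odot>\<^bsub>M\<^esub> \<phi> (insert k T - {k})
      \<oplus>\<^bsub>M\<^esub> (\<Oplus>\<^bsub>M\<^esub> j\<in>T. kcoef R x (insert k T) j \<odot>\<^bsub>M\<^esub> \<phi> (insert k T - {j}))"
    using fT kT cochains_carrier[OF \<phi>] by (intro M.finsum_insert) auto
  also have "insert k T - {j} = insert k (T - {j})" if "j \<in> T" for j using that kT by blast
  then have "(\<Oplus>\<^bsub>M\<^esub> j\<in>T. kcoef R x (insert k T) j \<odot>\<^bsub>M\<^esub> \<phi> (insert k T - {j}))
      = (\<Oplus>\<^bsub>M\<^esub> j\<in>T. kcoef R x (insert k T) j \<odot>\<^bsub>M\<^esub> \<phi> (insert k (T - {j})))"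
    using cochains_carrier[OF \<phi>] by (intro M.finsum_cong') auto
  finally show ?thesis using kT by simp
qed

lemma part_with_kdiff_at:
  assumes \<phi>: "\<phi> \<in> cochains M I i" and T: "T \<subseteq> I'" "card T = i"
  shows "part_with R M I k (kdiff R M x I i \<phi>) T
       = (alt_sign R (even i) \<otimes> x k) \<odot>\<^bsub>M\<^esub> \<phi> T
         \<oplus>\<^bsub>M\<^esub> (\<Oplus>\<^bsub>M\<^esub> j\<in>T. kcoef R x T j \<odot>\<^bsub>M\<^esub> part_with R M I k \<phi> (T - {j}))"
proof -
  note carr = cochains_carrier[OF \<phi>] cochains_carrier[OF part_with_cochains[OF \<phi>]]
  have fin: "finite T" using finite_subset_I'[OF T(1)] .
  define s where "s = alt_sign R (even_above k T)"
  have s: "s \<in> carrier R" by (simp add: s_def)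
  have "part_with R M I k (kdiff R M x I i \<phi>) T = s \<odot>\<^bsub>M\<^esub> (kcoef R x (insert k T) k \<odot>\<^bsub>M\<^esub> \<phi> T
      \<oplus>\<^bsub>M\<^esub> (\<Oplus>\<^bsub>M\<^esub> j\<in>T. kcoef R x (insert k T) j \<odot>\<^bsub>M\<^esub> \<phi> (insert k (T - {j}))))"
    using T by (simp add: part_with_def s_def kdiff_insert[OF \<phi>])
  also have "\<dots> = s \<odot>\<^bsub>M\<^esub> (kcoef R x (insert k T) k \<odot>\<^bsub>M\<^esub> \<phi> T)
      \<oplus>\<^bsub>M\<^esub> (\<Oplus>\<^bsub>M\<^esub> j\<in>T. s \<odot>\<^bsub>M\<^esub> (kcoef R x (insert k T) j \<odot>\<^bsub>M\<^esub> \<phi> (insert k (T - {j}))))"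
    using fin carr s by (simp add: smult_r_distr M.finsum_closed finsum_smult_ldistr)
  also have "(\<Oplus>\<^bsub>M\<^esub> j\<in>T. s \<odot>\<^bsub>M\<^esub> (kcoef R x (insert k T) j \<odot>\<^bsub>M\<^esub> \<phi> (insert k (T - {j}))))
      = (\<Oplus>\<^bsub>M\<^esub> j\<in>T. kcoef R x T j \<odot>\<^bsub>M\<^esub> part_with R M I k \<phi> (T - {j}))"
  proof (intro M.finsum_cong')
    fix j assume j: "j \<in> T"
    then show "s \<odot>\<^bsub>M\<^esub> (kcoef R x (insert k T) j \<odot>\<^bsub>M\<^esub> \<phi> (insert k (T - {j})))
        = kcoef R x T j \<odot>\<^bsub>M\<^esub> part_with R M I k \<phi> (T - {j})"
      using T carr kcoef_part_with[OF T(1) j] by (auto simp: s_def part_with_def smult_assoc1[symmetric])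
  qed (use carr in auto)
  also have "s \<odot>\<^bsub>M\<^esub> (kcoef R x (insert k T) k \<odot>\<^bsub>M\<^esub> \<phi> T) = (alt_sign R (even i) \<otimes> x k) \<odot>\<^bsub>M\<^esub> \<phi> T"
    using carr kcoef_part_with_self[OF T] by (simp add: s_def smult_assoc1[symmetric])
  finally show ?thesis .
qed

lemma part_with_kdiff:
  assumes \<phi>: "\<phi> \<in> cochains M I i"
  shows "part_with R M I k (kdiff R M x I i \<phi>) =
    cadd M (kdiff R M x I' (i - 1) (part_with R M I k \<phi>))
           (csmult M (alt_sign R (even i) \<otimes> x k) (part_without M I k \<phi>))"
    (is "?lhs = cadd M ?d ?c")
proof
  fix T
  show "?lhs T = cadd M ?d ?c T"
  proof (cases "T \<subseteq> I' \<and> card T = i")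
    case True
    then have T: "T \<subseteq> I'" "card T = i" by auto
    let ?\<Sigma> = "\<Oplus>\<^bsub>M\<^esub> j\<in>T. kcoef R x T j \<odot>\<^bsub>M\<^esub> part_with R M I k \<phi> (T - {j})"
    have d: "?d T = ?\<Sigma>" using T finite_subset_I'[OF T(1)] by (cases "i = 0") (auto simp: kdiff_def)
    have c: "?c T = (alt_sign R (even i) \<otimes> x k) \<odot>\<^bsub>M\<^esub> \<phi> T"
      using T by (simp add: csmult_def part_without_def)
    have "(alt_sign R (even i) \<otimes> x k) \<odot>\<^bsub>M\<^esub> \<phi> T \<in> carrier M" using cochains_carrier[OF \<phi>] by simp
    moreover have "?\<Sigma> \<in> carrier M"
      using cochains_carrier[OF part_with_cochains[OF \<phi>]] by (intro M.finsum_closed) auto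
    ultimately show ?thesis unfolding cadd_def d c part_with_kdiff_at[OF \<phi> T] by (rule M.a_comm)
  next
    case False
    have "?d T = \<zero>\<^bsub>M\<^esub>"
    proof (cases "i = 0")
      case True
      then show ?thesis using part_with_degree_0 \<phi> by simp (simp add: czero_def)
    qed (use False in \<open>auto simp: kdiff_def\<close>)
    moreover have "?lhs T = \<zero>\<^bsub>M\<^esub>"
    proof (cases "T \<subseteq> I'")
      case True
      then have "k \<notin> T" by blast
      then have "card (insert k T) = Suc (card T)" using finite_subset_I'[OF True] by simp
      then have "kdiff R M x I i \<phi> (insert k T) = \<zero>\<^bsub>M\<^esub>" using False True by (intro kdiff_out) auto
      then show ?thesis using True by (simp add: part_with_def)
    qed (simp add: part_with_def)
    moreover have "?c T = \<zero>\<^bsub>M\<^esub>"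
    proof (cases "T \<subseteq> I'")
      case True
      then have "\<phi> T = \<zero>\<^bsub>M\<^esub>" using False by (intro cochains_zeroD[OF \<phi>]) auto
      then show ?thesis using True by (simp add: csmult_def part_without_def)
    qed (simp add: csmult_def part_without_def)
    ultimately show ?thesis by (simp add: cadd_def)
  qed
qed

end

context koszul_split
begin

lemma part_without_coboundaries: "\<phi> \<in> coboundaries R M x I i \<Longrightarrow> part_without M I k \<phi> \<in> coboundaries R M x I' i"
proof (cases "i = 0")
  case False
  assume "\<phi> \<in> coboundaries R M x I i"
  then obtain \<psi> where "\<psi> \<in> cochains M I (i - 1)" "\<phi> = kdiff R M x I (i - 1) \<psi>"
    using False by (auto simp: coboundaries_pos)
  then show ?thesis using False by (auto simp: coboundaries_pos part_without_kdiff)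
qed (simp add: coboundaries_0)

lemma kdiff_glue_eq_czero:
  assumes \<alpha>: "\<alpha> \<in> cochains M I' i" and \<beta>: "\<beta> \<in> cochains M I' (i - 1)" and "i = 0 \<longrightarrow> \<beta> = czero M"
    and d\<alpha>: "kdiff R M x I' i \<alpha> = czero M"
    and d\<beta>: "cadd M (kdiff R M x I' (i - 1) \<beta>) (csmult M (alt_sign R (even i) \<otimes> x k) \<alpha>) = czero M"
  shows "kdiff R M x I i (glue R M I k \<alpha> \<beta>) = czero M"
proof -
  have \<phi>: "glue R M I k \<alpha> \<beta> \<in> cochains M I i" using assms(1-3) by simp
  show ?thesis
  proof (rule cochains_eq_if_parts_eq[OF kdiff_cochains[OF \<phi>] czero_cochains])
    show "part_without M I k (kdiff R M x I i (glue R M I k \<alpha> \<beta>)) = part_without M I k (czero M)"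
      using part_without_kdiff[OF \<phi>] d\<alpha> \<alpha> by simp
    show "part_with R M I k (kdiff R M x I i (glue R M I k \<alpha> \<beta>)) = part_with R M I k (czero M)"
      using part_with_kdiff[OF \<phi>] d\<beta> \<alpha> \<beta> by simp
  qed
qed

lemma kdiff_kdiff_step:
  assumes IH: "\<And>j \<psi>. \<psi> \<in> cochains M I' j \<Longrightarrow> kdiff R M x I' (Suc j) (kdiff R M x I' j \<psi>) = czero M"
    and \<phi>: "\<phi> \<in> cochains M I i"
  shows "kdiff R M x I (Suc i) (kdiff R M x I i \<phi>) = czero M"
proof -
  define c where "c = alt_sign R (even i) \<otimes> x k"
  have c: "c \<in> carrier R" by (simp add: c_def)
  let ?\<phi>0 = "part_without M I k \<phi>" and ?\<phi>1 = "part_with R M I k \<phi>"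
  have \<phi>0: "?\<phi>0 \<in> cochains M I' i" using \<phi> by simp
  have \<phi>1: "?\<phi>1 \<in> cochains M I' (i - 1)" by (rule part_with_cochains[OF \<phi>])
  have d\<phi>: "kdiff R M x I i \<phi> \<in> cochains M I (Suc i)" using \<phi> by simp
  have d\<phi>1: "kdiff R M x I' (i - 1) ?\<phi>1 \<in> cochains M I' i"
    using kdiff_cochains[OF \<phi>1] part_with_degree_0 \<phi> by (cases "i = 0") auto
  have dd\<phi>1: "kdiff R M x I' i (kdiff R M x I' (i - 1) ?\<phi>1) = czero M"
    using IH[OF \<phi>1] part_with_degree_0 \<phi> by (cases "i = 0") auto
  have sign: "alt_sign R (even (Suc i)) \<otimes> x k = \<ominus> \<one> \<otimes> c"
    by (simp add: c_def alt_sign_False[symmetric] alt_sign_mult_assoc)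
  show ?thesis
  proof (rule cochains_eq_if_parts_eq[OF kdiff_cochains[OF d\<phi>] czero_cochains])
    show "part_without M I k (kdiff R M x I (Suc i) (kdiff R M x I i \<phi>)) = part_without M I k (czero M)"
      using part_without_kdiff[OF d\<phi>] part_without_kdiff[OF \<phi>] IH[OF \<phi>0] by simp
    have "kdiff R M x I' i (part_with R M I k (kdiff R M x I i \<phi>)) = csmult M c (kdiff R M x I' i ?\<phi>0)"
      unfolding part_with_kdiff[OF \<phi>] c_def[symmetric] kdiff_cadd[OF d\<phi>1 csmult_cochains[OF c \<phi>0]]
        dd\<phi>1 kdiff_csmult[OF \<phi>0 c]
      by (rule cadd_czero_left[OF csmult_cochains[OF c kdiff_cochains[OF \<phi>0]]])
    then have "part_with R M I k (kdiff R M x I (Suc i) (kdiff R M x I i \<phi>))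
        = cadd M (csmult M c (kdiff R M x I' i ?\<phi>0)) (csmult M (\<ominus> \<one>) (csmult M c (kdiff R M x I' i ?\<phi>0)))"
      using part_with_kdiff[OF d\<phi>] part_without_kdiff[OF \<phi>] sign
        csmult_csmult[OF _ c kdiff_cochains[OF \<phi>0], of "\<ominus> \<one>", symmetric]
      by simp
    then show "part_with R M I k (kdiff R M x I (Suc i) (kdiff R M x I i \<phi>)) = part_with R M I k (czero M)"
      using cadd_csmult_minus_one[OF csmult_cochains[OF c kdiff_cochains[OF \<phi>0]]] by simp
  qed
qed

end

lemma (in koszul_seq) kdiff_kdiff:
  assumes "finite I" "\<phi> \<in> cochains M I i"
  shows "kdiff R M x I (Suc i) (kdiff R M x I i \<phi>) = czero M"
  using assms
proof (induction I arbitrary: \<phi> i rule: finite_induct)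
  case (insert k F)
  interpret koszul_split R M x "insert k F" k by unfold_locales (use insert in auto)
  have "insert k F - {k} = F" using insert by auto
  then show ?case using kdiff_kdiff_step insert by simp
qed (simp add: kdiff_empty)

context koszul_split
begin

lemma kdiff_part_with_if_part_without_czero:
  assumes \<theta>: "\<theta> \<in> cochains M I i" and d\<theta>: "kdiff R M x I i \<theta> = czero M"
    and \<theta>0: "part_without M I k \<theta> = czero M"
  shows "kdiff R M x I' (i - 1) (part_with R M I k \<theta>) = czero M"
  using part_with_kdiff[OF \<theta>] \<theta> d\<theta> \<theta>0 cadd_czero_right[OF kdiff_cochains[OF part_with_cochains[OF \<theta>]]]
  by simp

text \<open>The other part of such a cocycle is a cocycle \<open>d \<chi>\<close> on \<open>I - {k}\<close>, and the cocycle itself is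
  then \<open>d (glue 0 \<chi>)\<close>.\<close>

lemma coboundary_if_part_without_czero:
  assumes A: "acyclic_below R M x I' n" and i: "i < n"
    and \<theta>: "\<theta> \<in> cochains M I i" and d\<theta>: "kdiff R M x I i \<theta> = czero M"
    and \<theta>0: "part_without M I k \<theta> = czero M"
  shows "\<theta> \<in> coboundaries R M x I i"
proof -
  let ?\<theta>1 = "part_with R M I k \<theta>"
  have "?\<theta>1 \<in> coboundaries R M x I' (i - 1)"
  proof (cases "i = 0")
    case True
    then show ?thesis using part_with_degree_0 \<theta> by simp
  next
    case False
    then show ?thesis
      using acyclic_belowD[OF A _ part_with_cochains[OF \<theta>]] i
        kdiff_part_with_if_part_without_czero[OF \<theta> d\<theta> \<theta>0]
      by (cases "i - 1 = 0") (auto simp: Suc_diff_1 simp del: One_nat_def)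
  qed
  then consider "?\<theta>1 = czero M" | \<chi> where "i - 1 \<noteq> 0" "\<chi> \<in> cochains M I' (i - 1 - 1)"
      "?\<theta>1 = kdiff R M x I' (i - 1 - 1) \<chi>"
    by (cases "i - 1 = 0") (auto simp: coboundaries_0 coboundaries_pos)
  then show ?thesis
  proof cases
    case 1
    then have "\<theta> = czero M" using \<theta>0 by (intro cochains_eq_if_parts_eq[OF \<theta> czero_cochains]) auto
    then show ?thesis by simp
  next
    case 2
    define \<Xi> where "\<Xi> = glue R M I k (czero M) \<chi>"
    have \<Xi>: "\<Xi> \<in> cochains M I (i - 1)" unfolding \<Xi>_def using 2 by simp
    have \<Xi>0: "part_without M I k \<Xi> = czero M" and \<Xi>1: "part_with R M I k \<Xi> = \<chi>"
      unfolding \<Xi>_def using 2 by simp_all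
    have i1: "Suc (i - 1) = i" using 2 by simp
    have d\<Xi>: "kdiff R M x I (i - 1) \<Xi> \<in> cochains M I i" using kdiff_cochains[OF \<Xi>] i1 by simp
    have "kdiff R M x I (i - 1) \<Xi> = \<theta>"
    proof (rule cochains_eq_if_parts_eq[OF d\<Xi> \<theta>])
      show "part_without M I k (kdiff R M x I (i - 1) \<Xi>) = part_without M I k \<theta>"
        unfolding part_without_kdiff[OF \<Xi>] \<theta>0 \<Xi>0 by simp
      have "part_with R M I k (kdiff R M x I (i - 1) \<Xi>) = cadd M (kdiff R M x I' (i - 1 - 1) \<chi>) (czero M)"
        using part_with_kdiff[OF \<Xi>] \<Xi>0 \<Xi>1 by simp
      also have "\<dots> = ?\<theta>1" using 2(3) cadd_czero_right[OF kdiff_cochains[OF 2(2)]] by simp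
      finally show "part_with R M I k (kdiff R M x I (i - 1) \<Xi>) = ?\<theta>1" .
    qed
    then show ?thesis using \<Xi> 2 by (auto simp: coboundaries_pos)
  qed
qed

lemma acyclic_below_insert:
  assumes A: "acyclic_below R M x I' n"
  shows "acyclic_below R M x I n"
proof (rule acyclic_belowI)
  fix i \<phi> assume i: "i < n" and \<phi>: "\<phi> \<in> cochains M I i" and d\<phi>: "kdiff R M x I i \<phi> = czero M"
  have "part_without M I k \<phi> \<in> coboundaries R M x I' i"
    using acyclic_belowD[OF A i] \<phi> d\<phi> part_without_kdiff[OF \<phi>] by simp
  then consider "i = 0" "part_without M I k \<phi> = czero M"
    | \<psi> where "i \<noteq> 0" "\<psi> \<in> cochains M I' (i - 1)" "part_without M I k \<phi> = kdiff R M x I' (i - 1) \<psi>"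
    by (cases "i = 0") (auto simp: coboundaries_0 coboundaries_pos)
  then show "\<phi> \<in> coboundaries R M x I i"
  proof cases
    case 1
    then show ?thesis using coboundary_if_part_without_czero[OF A i \<phi> d\<phi>] by simp
  next
    case 2
    define \<Psi> where "\<Psi> = glue R M I k \<psi> (czero M)"
    have \<Psi>: "\<Psi> \<in> cochains M I (i - 1)" unfolding \<Psi>_def using 2 by simp
    have d\<Psi>: "kdiff R M x I (i - 1) \<Psi> \<in> cochains M I i" using kdiff_cochains[OF \<Psi>] 2 by simp
    have dd\<Psi>: "kdiff R M x I i (kdiff R M x I (i - 1) \<Psi>) = czero M"
      using kdiff_kdiff[OF finite_I \<Psi>] 2 by simp
    define \<theta> where "\<theta> = cadd M \<phi> (csmult M (\<ominus> \<one>) (kdiff R M x I (i - 1) \<Psi>))"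
    have \<theta>: "\<theta> \<in> cochains M I i" unfolding \<theta>_def using \<phi> d\<Psi> by simp
    have m1: "\<ominus> \<one> \<in> carrier R" by simp
    have "kdiff R M x I i \<theta> = czero M"
      unfolding \<theta>_def kdiff_cadd[OF \<phi> csmult_cochains[OF m1 d\<Psi>]] kdiff_csmult[OF d\<Psi> m1] d\<phi> dd\<Psi>
      by (simp add: cadd_czero_left)
    moreover have "part_without M I k \<theta> = czero M"
      using part_without_kdiff[OF \<Psi>] 2 \<phi> cadd_csmult_minus_one[OF kdiff_cochains[OF 2(2)]]
      by (simp add: \<theta>_def \<Psi>_def part_without_cadd part_without_csmult)
    ultimately have "\<theta> \<in> coboundaries R M x I i" by (rule coboundary_if_part_without_czero[OF A i \<theta>])
    moreover have "kdiff R M x I (i - 1) \<Psi> \<in> coboundaries R M x I i" using \<Psi> 2 by (auto simp: coboundaries_pos)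
    ultimately show ?thesis
      using coboundaries_cadd cadd_cadd_minus_cancel[OF \<phi> d\<Psi>] by (fastforce simp: \<theta>_def)
  qed
qed

end

definition cohom_ann :: "('a,'c) ring_scheme \<Rightarrow> ('a,'m,'d) module_scheme \<Rightarrow> (nat \<Rightarrow> 'a) \<Rightarrow> nat set \<Rightarrow> 'a set" where
  "cohom_ann R M x I = {r \<in> carrier R. \<forall>i \<alpha>. \<alpha> \<in> cochains M I i \<longrightarrow> kdiff R M x I i \<alpha> = czero M
                          \<longrightarrow> csmult M r \<alpha> \<in> coboundaries R M x I i}"

lemma (in koszul_seq) cohom_ann_ideal: "ideal (cohom_ann R M x I) R"
proof (rule idealI)
  have mult: "t \<otimes> a \<in> cohom_ann R M x I" if t: "t \<in> carrier R" and a: "a \<in> cohom_ann R M x I" for t a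
  proof -
    have "csmult M (t \<otimes> a) \<alpha> \<in> coboundaries R M x I i"
      if "\<alpha> \<in> cochains M I i" "kdiff R M x I i \<alpha> = czero M" for i \<alpha>
    proof -
      have "csmult M a \<alpha> \<in> coboundaries R M x I i" using a that by (auto simp: cohom_ann_def)
      then have "csmult M t (csmult M a \<alpha>) \<in> coboundaries R M x I i" by (rule coboundaries_csmult[OF t])
      then show ?thesis using csmult_csmult[OF t _ that(1), of a] a by (simp add: cohom_ann_def)
    qed
    then show ?thesis using t a by (auto simp: cohom_ann_def)
  qed
  show "subgroup (cohom_ann R M x I) (add_monoid R)"
  proof (rule R.add.subgroupI)
    have "\<zero> \<in> cohom_ann R M x I"
      using cochains_carrier by (auto simp: cohom_ann_def csmult_def czero_def[symmetric])
    then show "cohom_ann R M x I \<noteq> {}" by blast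
    fix a b assume a: "a \<in> cohom_ann R M x I" and b: "b \<in> cohom_ann R M x I"
    show "\<ominus> a \<in> cohom_ann R M x I"
      using mult[OF _ a, of "\<ominus> \<one>"] a by (simp add: cohom_ann_def R.l_minus)
    show "a \<oplus> b \<in> cohom_ann R M x I"
      using a b coboundaries_cadd by (auto simp: cohom_ann_def csmult_add_distrib)
  qed (auto simp: cohom_ann_def)
  fix a t assume "a \<in> cohom_ann R M x I" "t \<in> carrier R"
  then show "t \<otimes> a \<in> cohom_ann R M x I" "a \<otimes> t \<in> cohom_ann R M x I"
    using mult R.m_comm[of a t] by (auto simp: cohom_ann_def)
qed (rule R.ring_axioms)

text \<open>Each generator annihilates the Koszul cohomology: for a cocycle \<open>\<alpha>\<close> with parts
  \<open>\<alpha>\<^sub>0, \<alpha>\<^sub>1\<close>, the cocycle condition reads \<open>d \<alpha>\<^sub>1 = \<mp>x\<^sub>k \<alpha>\<^sub>0\<close>, and \<open>x\<^sub>k \<alpha>\<close> is the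
  coboundary of \<open>\<plusminus>\<alpha>\<^sub>1\<close> placed on the subsets avoiding \<open>k\<close>.\<close>

lemma (in koszul_split) x_smult_cocycle_degree_0:
  assumes \<alpha>: "\<alpha> \<in> cochains M I 0" and d\<alpha>: "kdiff R M x I 0 \<alpha> = czero M"
  shows "csmult M (x k) \<alpha> = czero M"
proof -
  have \<alpha>0: "part_without M I k \<alpha> \<in> cochains M I' 0" using \<alpha> by simp
  have "csmult M (x k) (part_without M I k \<alpha>) = czero M"
    using part_with_kdiff[OF \<alpha>] d\<alpha> part_with_degree_0[OF \<alpha>] cadd_czero_left[OF csmult_cochains[OF x_closed \<alpha>0]]
    by simp
  then show ?thesis
    using part_with_degree_0[OF \<alpha>] \<alpha>
    by (intro cochains_eq_if_parts_eq[OF csmult_cochains[OF x_closed \<alpha>] czero_cochains])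
      (auto simp: part_without_csmult part_with_csmult)
qed

lemma (in koszul_split) x_in_cohom_ann: "x k \<in> cohom_ann R M x I"
  unfolding cohom_ann_def
proof (intro CollectI conjI allI impI x_closed)
  fix i \<alpha> assume \<alpha>: "\<alpha> \<in> cochains M I i" and d\<alpha>: "kdiff R M x I i \<alpha> = czero M"
  define c where "c = alt_sign R (even i) \<otimes> x k"
  have c: "c \<in> carrier R" by (simp add: c_def)
  let ?\<alpha>0 = "part_without M I k \<alpha>" and ?\<alpha>1 = "part_with R M I k \<alpha>"
  have \<alpha>0: "?\<alpha>0 \<in> cochains M I' i" using \<alpha> by simp
  have \<alpha>1: "?\<alpha>1 \<in> cochains M I' (i - 1)" by (rule part_with_cochains[OF \<alpha>])
  have xa: "csmult M (x k) \<alpha> \<in> cochains M I i" using \<alpha> by simp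
  have cocycle: "cadd M (kdiff R M x I' (i - 1) ?\<alpha>1) (csmult M c ?\<alpha>0) = czero M"
    using part_with_kdiff[OF \<alpha>] d\<alpha> by (simp add: c_def)
  show "csmult M (x k) \<alpha> \<in> coboundaries R M x I i"
  proof (cases "i = 0")
    case True
    then show ?thesis using x_smult_cocycle_degree_0 \<alpha> d\<alpha> by simp
  next
    case False
    define s where "s = alt_sign R (odd i)"
    have s: "s \<in> carrier R" by (simp add: s_def)
    have s_c: "s \<otimes> (\<ominus> \<one> \<otimes> c) = x k"
      by (simp add: s_def c_def alt_sign_False[symmetric] alt_sign_mult_assoc)
    have s_c': "(alt_sign R (even (i - 1)) \<otimes> x k) \<otimes> s = x k"
      using False by (simp add: s_def alt_sign_mult_commute)
    define \<gamma> where "\<gamma> = glue R M I k (csmult M s ?\<alpha>1) (czero M)"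
    have \<gamma>: "\<gamma> \<in> cochains M I (i - 1)" unfolding \<gamma>_def using s \<alpha>1 by simp
    have d\<gamma>: "kdiff R M x I (i - 1) \<gamma> \<in> cochains M I i" using kdiff_cochains[OF \<gamma>] False by simp
    have \<gamma>0: "part_without M I k \<gamma> = csmult M s ?\<alpha>1" and \<gamma>1: "part_with R M I k \<gamma> = czero M"
      unfolding \<gamma>_def by (simp_all add: part_without_glue[OF csmult_cochains[OF s \<alpha>1]])
    have d\<alpha>1: "kdiff R M x I' (i - 1) ?\<alpha>1 = csmult M (\<ominus> \<one>) (csmult M c ?\<alpha>0)"
      by (rule eq_csmult_minus_one_if_cadd_eq_czero[OF kdiff_cochains[OF \<alpha>1] csmult_cochains[OF c \<alpha>0] cocycle])
    have "kdiff R M x I (i - 1) \<gamma> = csmult M (x k) \<alpha>"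
    proof (rule cochains_eq_if_parts_eq[OF d\<gamma> xa])
      show "part_without M I k (kdiff R M x I (i - 1) \<gamma>) = part_without M I k (csmult M (x k) \<alpha>)"
        using part_without_kdiff[OF \<gamma>] kdiff_csmult[OF \<alpha>1 s] d\<alpha>1 s c \<alpha>0 \<alpha>1
        by (simp add: \<gamma>0 csmult_csmult R.m_assoc[symmetric] s_c part_without_csmult)
      show "part_with R M I k (kdiff R M x I (i - 1) \<gamma>) = part_with R M I k (csmult M (x k) \<alpha>)"
        using part_with_kdiff[OF \<gamma>] s \<alpha>1 s_c' cadd_czero_left[OF csmult_cochains[OF x_closed \<alpha>1]]
        by (simp add: \<gamma>0 \<gamma>1 csmult_csmult part_with_csmult[OF \<alpha>])
    qed
    then show ?thesis
      unfolding coboundaries_pos[OF False] using \<gamma> by (intro image_eqI[where x = \<gamma>]) auto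
  qed
qed

lemma (in koszul_seq) genideal_subset_cohom_ann:
  assumes "finite I"
  shows "Idl (x ` I) \<subseteq> cohom_ann R M x I"
proof (rule R.genideal_minimal[OF cohom_ann_ideal])
  show "x ` I \<subseteq> cohom_ann R M x I"
  proof
    fix y assume "y \<in> x ` I"
    then obtain k where "k \<in> I" "y = x k" by blast
    then show "y \<in> cohom_ann R M x I"
      using koszul_split.x_in_cohom_ann[of R M x I k] assms by (simp add: koszul_split_def koszul_split_axioms_def koszul_seq_axioms)
  qed
qed

text \<open>Dually to \<open>acyclic_below_insert\<close>: a cocycle \<open>\<alpha>\<close> on \<open>I - {k}\<close> satisfies
  \<open>x\<^sub>k \<alpha> = d h\<close> because \<open>x\<^sub>k\<close> lies in the ideal of the other generators, and then
  \<open>glue \<alpha> (\<mp>h)\<close> is a cocycle on \<open>I\<close> whose coboundary primitive restricts to one of \<open>\<alpha>\<close>.\<close>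

lemma (in koszul_split) acyclic_below_remove:
  assumes red: "x k \<in> Idl (x ` I')" and A: "acyclic_below R M x I n"
  shows "acyclic_below R M x I' n"
proof (rule acyclic_belowI)
  fix i \<alpha> assume i: "i < n" and \<alpha>: "\<alpha> \<in> cochains M I' i" and d\<alpha>: "kdiff R M x I' i \<alpha> = czero M"
  have ann: "csmult M (x k) \<alpha> \<in> coboundaries R M x I' i"
    using genideal_subset_cohom_ann[of I'] red \<alpha> d\<alpha> finite_I by (auto simp: cohom_ann_def)
  define c where "c = alt_sign R (even i)"
  have c: "c \<in> carrier R" by (simp add: c_def)
  obtain \<beta> where \<beta>: "\<beta> \<in> cochains M I' (i - 1)" "i = 0 \<longrightarrow> \<beta> = czero M"
    and d\<beta>: "cadd M (kdiff R M x I' (i - 1) \<beta>) (csmult M (c \<otimes> x k) \<alpha>) = czero M"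
  proof (cases "i = 0")
    case True
    then show ?thesis using ann c \<alpha>
      by (intro that[of "czero M"]) (simp_all add: coboundaries_0 csmult_csmult[symmetric] cadd_czero_left)
  next
    case False
    then obtain h where h: "h \<in> cochains M I' (i - 1)" "csmult M (x k) \<alpha> = kdiff R M x I' (i - 1) h"
      using ann by (auto simp: coboundaries_pos)
    have y: "csmult M (c \<otimes> x k) \<alpha> \<in> cochains M I' i" using c \<alpha> by simp
    have "kdiff R M x I' (i - 1) (csmult M (\<ominus> c) h) = csmult M (\<ominus> \<one>) (csmult M (c \<otimes> x k) \<alpha>)"
      using kdiff_csmult[OF h(1), of "\<ominus> c"] h(2)[symmetric] c \<alpha> by (simp add: csmult_csmult R.l_minus R.m_assoc)
    then have "cadd M (kdiff R M x I' (i - 1) (csmult M (\<ominus> c) h)) (csmult M (c \<otimes> x k) \<alpha>)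
        = cadd M (csmult M (c \<otimes> x k) \<alpha>) (csmult M (\<ominus> \<one>) (csmult M (c \<otimes> x k) \<alpha>))"
      using y by (simp add: cadd_comm[OF csmult_cochains[OF _ y]])
    also have "\<dots> = czero M" by (rule cadd_csmult_minus_one[OF y])
    finally have "cadd M (kdiff R M x I' (i - 1) (csmult M (\<ominus> c) h)) (csmult M (c \<otimes> x k) \<alpha>) = czero M" .
    then show ?thesis using False h c by (intro that[of "csmult M (\<ominus> c) h"]) simp_all
  qed
  define \<phi> where "\<phi> = glue R M I k \<alpha> \<beta>"
  have \<phi>: "\<phi> \<in> cochains M I i" unfolding \<phi>_def using \<alpha> \<beta> by simp
  have "kdiff R M x I i \<phi> = czero M"
    unfolding \<phi>_def using kdiff_glue_eq_czero[OF \<alpha> \<beta> d\<alpha>] d\<beta> by (simp add: c_def)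
  then have "\<phi> \<in> coboundaries R M x I i" using acyclic_belowD[OF A i \<phi>] by simp
  then have "part_without M I k \<phi> \<in> coboundaries R M x I' i" by (rule part_without_coboundaries)
  then show "\<alpha> \<in> coboundaries R M x I' i" using \<alpha> by (simp add: \<phi>_def)
qed

section \<open>Reindexing the generators\<close>

lemma card_less_image_strict_mono_on:
  fixes h :: "nat \<Rightarrow> nat"
  assumes h: "strict_mono_on I h" and T: "T \<subseteq> I" and j: "j \<in> T"
  shows "card {m\<in>h ` T. m < h j} = card {m\<in>T. m < j}"
proof -
  have "{m\<in>h ` T. m < h j} = h ` {m\<in>T. m < j}"
    using T j strict_mono_on_less[OF h] by (auto simp: subset_iff)
  moreover have "inj_on h {m\<in>T. m < j}"
    by (rule inj_on_subset[OF strict_mono_on_imp_inj_on[OF h]]) (use T in auto)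
  ultimately show ?thesis by (simp add: card_image)
qed

definition pull_cochain :: "('a,'m,'d) module_scheme \<Rightarrow> (nat \<Rightarrow> nat) \<Rightarrow> nat set \<Rightarrow> (nat set \<Rightarrow> 'm) \<Rightarrow> nat set \<Rightarrow> 'm" where
  "pull_cochain M h I \<phi> = (\<lambda>T. if T \<subseteq> I then \<phi> (h ` T) else \<zero>\<^bsub>M\<^esub>)"

definition push_cochain :: "('a,'m,'d) module_scheme \<Rightarrow> (nat \<Rightarrow> nat) \<Rightarrow> nat set \<Rightarrow> (nat set \<Rightarrow> 'm) \<Rightarrow> nat set \<Rightarrow> 'm" where
  "push_cochain M h I \<psi> = (\<lambda>S. if S \<subseteq> h ` I then \<psi> (I \<inter> h -` S) else \<zero>\<^bsub>M\<^esub>)"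

locale koszul_reindex = koszul_seq +
  fixes h :: "nat \<Rightarrow> nat" and I :: "nat set"
  assumes strict_mono_h: "strict_mono_on I h"
begin

sublocale reindexed: koszul_seq R M "\<lambda>j. x (h j)" by unfold_locales simp

lemma inj_h: "inj_on h I"
  by (rule strict_mono_on_imp_inj_on[OF strict_mono_h])

lemma card_image_h: "T \<subseteq> I \<Longrightarrow> card (h ` T) = card T"
  using inj_h by (meson card_image inj_on_subset)

lemma vimage_image_h: "T \<subseteq> I \<Longrightarrow> I \<inter> h -` (h ` T) = T"
  using inj_h by (auto simp: inj_on_def)

lemma pull_cochain_cochains:
  assumes \<phi>: "\<phi> \<in> cochains M (h ` I) i"
  shows "pull_cochain M h I \<phi> \<in> cochains M I i"
proof (rule cochainsI)
  fix T
  show "pull_cochain M h I \<phi> T \<in> carrier M" using cochains_carrier[OF \<phi>] by (simp add: pull_cochain_def)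
  assume "\<not> (T \<subseteq> I \<and> card T = i)"
  then show "pull_cochain M h I \<phi> T = \<zero>\<^bsub>M\<^esub>"
    using cochains_zeroD[OF \<phi>, of "h ` T"] card_image_h by (auto simp: pull_cochain_def)
qed

lemma push_cochain_cochains:
  assumes \<psi>: "\<psi> \<in> cochains M I i"
  shows "push_cochain M h I \<psi> \<in> cochains M (h ` I) i"
proof (rule cochainsI)
  fix S
  show "push_cochain M h I \<psi> S \<in> carrier M" using cochains_carrier[OF \<psi>] by (simp add: push_cochain_def)
  assume S: "\<not> (S \<subseteq> h ` I \<and> card S = i)"
  show "push_cochain M h I \<psi> S = \<zero>\<^bsub>M\<^esub>"
  proof (cases "S \<subseteq> h ` I")
    case True
    have "h ` (I \<inter> h -` S) = S" using True by auto
    then have "card (I \<inter> h -` S) = card S" using card_image_h[of "I \<inter> h -` S"] by simp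
    then show ?thesis using True S cochains_zeroD[OF \<psi>, of "I \<inter> h -` S"] by (simp add: push_cochain_def)
  qed (simp add: push_cochain_def)
qed

lemma pull_push_cochain:
  assumes "\<psi> \<in> cochains M I i"
  shows "pull_cochain M h I (push_cochain M h I \<psi>) = \<psi>"
proof
  fix T
  show "pull_cochain M h I (push_cochain M h I \<psi>) T = \<psi> T"
  proof (cases "T \<subseteq> I")
    case True
    then show ?thesis by (auto simp: pull_cochain_def push_cochain_def vimage_image_h)
  qed (simp add: pull_cochain_def cochains_zeroD[OF assms])
qed

lemma push_pull_cochain:
  assumes "\<phi> \<in> cochains M (h ` I) i"
  shows "push_cochain M h I (pull_cochain M h I \<phi>) = \<phi>"
proof
  fix S
  show "push_cochain M h I (pull_cochain M h I \<phi>) S = \<phi> S"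
  proof (cases "S \<subseteq> h ` I")
    case True
    then have "h ` (I \<inter> h -` S) = S" by auto
    then show ?thesis using True by (simp add: pull_cochain_def push_cochain_def)
  qed (simp add: push_cochain_def cochains_zeroD[OF assms])
qed

lemma pull_cochain_czero[simp]: "pull_cochain M h I (czero M) = czero M"
  by (auto simp: pull_cochain_def czero_def)

lemma push_cochain_czero[simp]: "push_cochain M h I (czero M) = czero M"
  by (auto simp: push_cochain_def czero_def)

lemma pull_cochain_kdiff:
  assumes \<phi>: "\<phi> \<in> cochains M (h ` I) i"
  shows "pull_cochain M h I (kdiff R M x (h ` I) i \<phi>) = kdiff R M (\<lambda>j. x (h j)) I i (pull_cochain M h I \<phi>)"
proof
  fix T
  show "pull_cochain M h I (kdiff R M x (h ` I) i \<phi>) T = kdiff R M (\<lambda>j. x (h j)) I i (pull_cochain M h I \<phi>) T"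
  proof (cases "T \<subseteq> I \<and> card T = Suc i")
    case True
    then have T: "T \<subseteq> I" "card T = Suc i" "inj_on h T" using inj_h inj_on_subset by blast+
    have "kdiff R M x (h ` I) i \<phi> (h ` T) = (\<Oplus>\<^bsub>M\<^esub> j\<in>h ` T. kcoef R x (h ` T) j \<odot>\<^bsub>M\<^esub> \<phi> (h ` T - {j}))"
      using T card_image_h[OF T(1)] by (intro kdiff_in) auto
    also have "\<dots> = (\<Oplus>\<^bsub>M\<^esub> j\<in>T. kcoef R x (h ` T) (h j) \<odot>\<^bsub>M\<^esub> \<phi> (h ` T - {h j}))"
      using cochains_carrier[OF \<phi>] by (intro M.finsum_reindex[OF _ T(3)]) auto
    also have "\<dots> = (\<Oplus>\<^bsub>M\<^esub> j\<in>T. kcoef R (\<lambda>j. x (h j)) T j \<odot>\<^bsub>M\<^esub> pull_cochain M h I \<phi> (T - {j}))"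
    proof (intro M.finsum_cong')
      fix j assume j: "j \<in> T"
      have "h ` T - {h j} = h ` (T - {j})" using inj_on_image_set_diff[OF T(3), of T "{j}"] j by simp
      then show "kcoef R x (h ` T) (h j) \<odot>\<^bsub>M\<^esub> \<phi> (h ` T - {h j})
          = kcoef R (\<lambda>j. x (h j)) T j \<odot>\<^bsub>M\<^esub> pull_cochain M h I \<phi> (T - {j})"
        using T j card_less_image_strict_mono_on[OF strict_mono_h T(1) j]
        by (auto simp: kcoef_def pull_cochain_def)
    qed (use cochains_carrier[OF pull_cochain_cochains[OF \<phi>]] in auto)
    finally show ?thesis using T by (simp add: pull_cochain_def kdiff_in)
  next
    case False
    then have "\<not> (h ` T \<subseteq> h ` I \<and> card (h ` T) = Suc i)" if "T \<subseteq> I" using that card_image_h by auto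
    then show ?thesis using False by (auto simp: pull_cochain_def kdiff_out)
  qed
qed

lemma push_cochain_kdiff:
  assumes \<psi>: "\<psi> \<in> cochains M I i"
  shows "push_cochain M h I (kdiff R M (\<lambda>j. x (h j)) I i \<psi>) = kdiff R M x (h ` I) i (push_cochain M h I \<psi>)"
proof -
  have p: "push_cochain M h I \<psi> \<in> cochains M (h ` I) i" by (rule push_cochain_cochains[OF \<psi>])
  have "kdiff R M (\<lambda>j. x (h j)) I i \<psi> = pull_cochain M h I (kdiff R M x (h ` I) i (push_cochain M h I \<psi>))"
    using pull_cochain_kdiff[OF p] pull_push_cochain[OF \<psi>] by simp
  then show ?thesis using push_pull_cochain[OF kdiff_cochains[OF p]] by simp
qed

lemma cohom_nonzero_reindex: "cohom_nonzero R M x (h ` I) i \<longleftrightarrow> cohom_nonzero R M (\<lambda>j. x (h j)) I i"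
proof
  assume "cohom_nonzero R M x (h ` I) i"
  then show "cohom_nonzero R M (\<lambda>j. x (h j)) I i"
    by (rule cohom_nonzero_transfer[where F = "pull_cochain M h I" and G = "push_cochain M h I"])
      (simp_all add: pull_cochain_cochains push_cochain_cochains push_pull_cochain pull_cochain_kdiff push_cochain_kdiff)
next
  assume "cohom_nonzero R M (\<lambda>j. x (h j)) I i"
  then show "cohom_nonzero R M x (h ` I) i"
    by (rule cohom_nonzero_transfer[where F = "push_cochain M h I" and G = "pull_cochain M h I"])
      (simp_all add: pull_cochain_cochains push_cochain_cochains pull_push_cochain pull_cochain_kdiff push_cochain_kdiff)
qed

lemma acyclic_below_reindex: "acyclic_below R M x (h ` I) n \<longleftrightarrow> acyclic_below R M (\<lambda>j. x (h j)) I n"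
  by (simp add: acyclic_below_def cohom_nonzero_reindex)

end

section \<open>Koszul grade of a list of generators\<close>

definition list_seq :: "('a,'c) ring_scheme \<Rightarrow> 'a list \<Rightarrow> nat \<Rightarrow> 'a" where
  "list_seq R xs = (\<lambda>j. if j < length xs then xs ! j else \<zero>\<^bsub>R\<^esub>)"

definition Kgrade_seq :: "('a,'c) ring_scheme \<Rightarrow> ('a,'m,'d) module_scheme \<Rightarrow> (nat \<Rightarrow> 'a) \<Rightarrow> nat set \<Rightarrow> enat" where
  "Kgrade_seq R M x I = (INF i \<in> {i. cohom_nonzero R M x I i}. enat i)"

lemma enat_le_if_all_nat_le:
  assumes le: "\<And>n. enat n \<le> a \<Longrightarrow> enat n \<le> b"
  shows "a \<le> b"
proof (cases a)
  case (enat m)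
  then show ?thesis using le[of m] by simp
next
  case infinity
  show ?thesis
  proof (cases b)
    case (enat m)
    then show ?thesis using le[of "Suc m"] infinity by simp
  qed simp
qed

lemma enat_le_Kgrade_seq_iff: "enat n \<le> Kgrade_seq R M x I \<longleftrightarrow> acyclic_below R M x I n"
  unfolding Kgrade_seq_def acyclic_below_def by (auto simp: le_INF_iff; metis not_le)

lemma Kgrade_seq_mono:
  "(\<And>n. acyclic_below R M x I n \<Longrightarrow> acyclic_below R M y J n) \<Longrightarrow> Kgrade_seq R M x I \<le> Kgrade_seq R M y J"
  by (rule enat_le_if_all_nat_le) (simp add: enat_le_Kgrade_seq_iff)

context koszul_seq
begin

lemma cohom_nonzero_cong:
  assumes "\<And>j. j \<in> I \<Longrightarrow> x j = y j"
  shows "cohom_nonzero R M y I i = cohom_nonzero R M x I i"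
proof -
  have kc: "kdiff R M y I i' \<phi> = kdiff R M x I i' \<phi>" if "\<phi> \<in> cochains M I i'" for \<phi> i'
    using kdiff_cong[OF assms that] by simp
  have "coboundaries R M y I i = coboundaries R M x I i"
    by (cases "i = 0") (auto simp: coboundaries_def kc image_def)
  then show ?thesis unfolding cohom_nonzero_def using kc by auto
qed

lemma acyclic_below_cong:
  assumes "\<And>j. j \<in> I \<Longrightarrow> x j = y j"
  shows "acyclic_below R M y I n = acyclic_below R M x I n"
  unfolding acyclic_below_def using cohom_nonzero_cong[OF assms] by simp

lemma acyclic_below_Un:
  assumes "finite D" "S \<inter> D = {}" "finite S" "acyclic_below R M x S n"
  shows "acyclic_below R M x (S \<union> D) n"
  using assms
proof (induction D rule: finite_induct)
  case (insert k D)
  interpret koszul_split R M x "S \<union> insert k D" k by unfold_locales (use insert in auto)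
  have "S \<union> insert k D - {k} = S \<union> D" using insert by auto
  moreover have "acyclic_below R M x (S \<union> D) n" using insert by blast
  ultimately show ?case using acyclic_below_insert by simp
qed simp

lemma acyclic_below_remove_redundant:
  assumes "finite D" "S \<inter> D = {}" "finite S" "\<And>k. k \<in> D \<Longrightarrow> x k \<in> Idl (x ` S)"
    and "acyclic_below R M x (S \<union> D) n"
  shows "acyclic_below R M x S n"
  using assms
proof (induction D rule: finite_induct)
  case (insert k D)
  interpret koszul_split R M x "S \<union> insert k D" k by unfold_locales (use insert in auto)
  have e: "S \<union> insert k D - {k} = S \<union> D" using insert by auto
  have "x k \<in> Idl (x ` S)" using insert by auto
  also have "\<dots> \<subseteq> Idl (x ` (S \<union> D))" by (rule R.subset_Idl_subset) auto
  finally have "acyclic_below R M x (S \<union> D) n" using acyclic_below_remove[of n] insert.prems e by simp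
  then show ?case using insert.IH insert.prems by blast
qed simp

end

context module
begin

lemma koszul_seq_list_seq: "set xs \<subseteq> carrier R \<Longrightarrow> koszul_seq R M (list_seq R xs)"
  by unfold_locales (auto simp: list_seq_def)

lemma koszul_d_eq_kdiff:
  assumes xs: "set xs \<subseteq> carrier R" and \<phi>: "\<phi> \<in> cochains M {0..<length xs} i"
  shows "koszul_d R M xs i \<phi> = kdiff R M (list_seq R xs) {0..<length xs} i \<phi>"
proof
  fix T
  interpret koszul_seq R M "list_seq R xs" using xs by (rule koszul_seq_list_seq)
  show "koszul_d R M xs i \<phi> T = kdiff R M (list_seq R xs) {0..<length xs} i \<phi> T"
  proof (cases "T \<subseteq> {0..<length xs} \<and> card T = Suc i")
    case True
    have "(\<Oplus>\<^bsub>M\<^esub> j\<in>T. (if even (card {k\<in>T. k < j}) then xs ! j else \<ominus> (xs ! j)) \<odot>\<^bsub>M\<^esub> \<phi> (T - {j}))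
        = (\<Oplus>\<^bsub>M\<^esub> j\<in>T. kcoef R (list_seq R xs) T j \<odot>\<^bsub>M\<^esub> \<phi> (T - {j}))"
    proof (rule M.finsum_cong')
      fix j assume "j \<in> T"
      then have "j < length xs" using True by auto
      then show "(if even (card {k\<in>T. k < j}) then xs ! j else \<ominus> (xs ! j)) \<odot>\<^bsub>M\<^esub> \<phi> (T - {j})
          = kcoef R (list_seq R xs) T j \<odot>\<^bsub>M\<^esub> \<phi> (T - {j})"
        using nth_mem xs by (auto simp: kcoef_def list_seq_def alt_sign_def R.l_minus subset_iff)
    qed (use cochains_carrier[OF \<phi>] in auto)
    then show ?thesis using True by (simp add: koszul_d_def kdiff_def)
  next
    case False
    then show ?thesis unfolding koszul_d_def kdiff_def if_not_P[OF False] by simp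
  qed
qed

lemma Kgrade_gens_eq_Kgrade_seq:
  assumes xs: "set xs \<subseteq> carrier R"
  shows "Kgrade_gens R xs M = Kgrade_seq R M (list_seq R xs) {0..<length xs}"
proof -
  have cc: "koszul_cochains M (length xs) = cochains M {0..<length xs}"
    by (auto simp: koszul_cochains_def cochains_def fun_eq_iff)
  have "koszul_cohom_nonzero R M xs i = cohom_nonzero R M (list_seq R xs) {0..<length xs} i" for i
  proof -
    have "koszul_d R M xs (i - 1) ` cochains M {0..<length xs} (i - 1)
       = kdiff R M (list_seq R xs) {0..<length xs} (i - 1) ` cochains M {0..<length xs} (i - 1)"
      using koszul_d_eq_kdiff[OF xs] by (auto simp: image_def)
    then show ?thesis unfolding koszul_cohom_nonzero_def cohom_nonzero_def coboundaries_def cc czero_def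
      using koszul_d_eq_kdiff[OF xs] by (auto simp: czero_def)
  qed
  then have "koszul_cohom_nonzero R M xs = cohom_nonzero R M (list_seq R xs) {0..<length xs}" by (rule ext)
  then show ?thesis unfolding Kgrade_gens_def Kgrade_seq_def by simp
qed

lemma acyclic_below_list_seq_shift:
  assumes "set xs \<subseteq> carrier R" "set ys \<subseteq> carrier R"
  shows "acyclic_below R M (list_seq R (xs @ ys)) {length xs..<length xs + length ys} n
     \<longleftrightarrow> acyclic_below R M (list_seq R ys) {0..<length ys} n"
proof -
  have "koszul_seq R M (list_seq R (xs @ ys))" using assms by (intro koszul_seq_list_seq) simp
  moreover have "strict_mono_on {0..<length ys} (\<lambda>j. j + length xs)" by (rule strict_mono_onI) simp
  ultimately interpret koszul_reindex R M "list_seq R (xs @ ys)" "\<lambda>j. j + length xs" "{0..<length ys}"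
    by (intro koszul_reindex.intro koszul_reindex_axioms.intro)
  have "(\<lambda>j. j + length xs) ` {0..<length ys} = {length xs..<length xs + length ys}"
  proof (rule Set.set_eqI)
    fix y
    show "y \<in> (\<lambda>j. j + length xs) ` {0..<length ys} \<longleftrightarrow> y \<in> {length xs..<length xs + length ys}"
    proof
      assume "y \<in> {length xs..<length xs + length ys}"
      then have "y = (y - length xs) + length xs" "y - length xs \<in> {0..<length ys}" by auto
      then show "y \<in> (\<lambda>j. j + length xs) ` {0..<length ys}" by (rule image_eqI)
    qed auto
  qed
  then have "acyclic_below R M (list_seq R (xs @ ys)) {length xs..<length xs + length ys} n
     \<longleftrightarrow> acyclic_below R M (\<lambda>j. list_seq R (xs @ ys) (j + length xs)) {0..<length ys} n"
    using acyclic_below_reindex[of n] by simp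
  also have "\<dots> \<longleftrightarrow> acyclic_below R M (list_seq R ys) {0..<length ys} n"
    using reindexed.acyclic_below_cong[of "{0..<length ys}" "list_seq R ys" n]
    by (simp add: list_seq_def nth_append)
  finally show ?thesis .
qed

lemma Kgrade_gens_le_append_right:
  assumes xs: "set xs \<subseteq> carrier R" and ys: "set ys \<subseteq> carrier R"
  shows "Kgrade_gens R xs M \<le> Kgrade_gens R (xs @ ys) M"
proof -
  interpret koszul_seq R M "list_seq R (xs @ ys)" using xs ys by (intro koszul_seq_list_seq) auto
  have xys: "set (xs @ ys) \<subseteq> carrier R" using xs ys by simp
  have un: "{0..<length xs} \<union> {length xs..<length xs + length ys} = {0..<length (xs @ ys)}" by auto
  show ?thesis unfolding Kgrade_gens_eq_Kgrade_seq[OF xs] Kgrade_gens_eq_Kgrade_seq[OF xys]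
  proof (rule Kgrade_seq_mono)
    fix n assume "acyclic_below R M (list_seq R xs) {0..<length xs} n"
    then have "acyclic_below R M (list_seq R (xs @ ys)) {0..<length xs} n"
      using acyclic_below_cong[of "{0..<length xs}" "list_seq R xs"] by (simp add: list_seq_def nth_append)
    then have "acyclic_below R M (list_seq R (xs @ ys)) ({0..<length xs} \<union> {length xs..<length xs + length ys}) n"
      by (intro acyclic_below_Un) auto
    then show "acyclic_below R M (list_seq R (xs @ ys)) {0..<length (xs @ ys)} n" by (simp only: un)
  qed
qed

lemma Kgrade_gens_le_append_left:
  assumes xs: "set xs \<subseteq> carrier R" and ys: "set ys \<subseteq> carrier R"
  shows "Kgrade_gens R ys M \<le> Kgrade_gens R (xs @ ys) M"
proof -
  interpret koszul_seq R M "list_seq R (xs @ ys)" using xs ys by (intro koszul_seq_list_seq) auto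
  have xys: "set (xs @ ys) \<subseteq> carrier R" using xs ys by simp
  have un: "{length xs..<length xs + length ys} \<union> {0..<length xs} = {0..<length (xs @ ys)}" by auto
  show ?thesis unfolding Kgrade_gens_eq_Kgrade_seq[OF ys] Kgrade_gens_eq_Kgrade_seq[OF xys]
  proof (rule Kgrade_seq_mono)
    fix n assume "acyclic_below R M (list_seq R ys) {0..<length ys} n"
    then have "acyclic_below R M (list_seq R (xs @ ys)) {length xs..<length xs + length ys} n"
      using acyclic_below_list_seq_shift[OF xs ys] by simp
    then have "acyclic_below R M (list_seq R (xs @ ys)) ({length xs..<length xs + length ys} \<union> {0..<length xs}) n"
      by (intro acyclic_below_Un) auto
    then show "acyclic_below R M (list_seq R (xs @ ys)) {0..<length (xs @ ys)} n" by (simp only: un)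
  qed
qed

lemma Kgrade_gens_append_le_if_redundant:
  assumes xs: "set xs \<subseteq> carrier R" and ys: "set ys \<subseteq> carrier R" and red: "set xs \<subseteq> Idl (set ys)"
  shows "Kgrade_gens R (xs @ ys) M \<le> Kgrade_gens R ys M"
proof -
  interpret koszul_seq R M "list_seq R (xs @ ys)" using xs ys by (intro koszul_seq_list_seq) auto
  have xys: "set (xs @ ys) \<subseteq> carrier R" using xs ys by simp
  have un: "{length xs..<length xs + length ys} \<union> {0..<length xs} = {0..<length (xs @ ys)}" by auto
  have img: "list_seq R (xs @ ys) ` {length xs..<length xs + length ys} = set ys"
  proof (rule Set.set_eqI)
    fix y
    show "y \<in> list_seq R (xs @ ys) ` {length xs..<length xs + length ys} \<longleftrightarrow> y \<in> set ys"
    proof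
      assume "y \<in> list_seq R (xs @ ys) ` {length xs..<length xs + length ys}"
      then obtain j where "j \<in> {length xs..<length xs + length ys}" "y = list_seq R (xs @ ys) j" by blast
      then have "y = ys ! (j - length xs)" "j - length xs < length ys" by (auto simp: list_seq_def nth_append)
      then show "y \<in> set ys" by simp
    next
      assume "y \<in> set ys"
      then obtain j where j: "j < length ys" "y = ys ! j" by (auto simp: in_set_conv_nth)
      then have "y = list_seq R (xs @ ys) (j + length xs)" by (simp add: list_seq_def nth_append)
      then show "y \<in> list_seq R (xs @ ys) ` {length xs..<length xs + length ys}" using j(1) by (intro image_eqI) auto
    qed
  qed
  show ?thesis unfolding Kgrade_gens_eq_Kgrade_seq[OF ys] Kgrade_gens_eq_Kgrade_seq[OF xys]
  proof (rule Kgrade_seq_mono)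
    fix n assume a: "acyclic_below R M (list_seq R (xs @ ys)) {0..<length (xs @ ys)} n"
    have "acyclic_below R M (list_seq R (xs @ ys)) {length xs..<length xs + length ys} n"
    proof (rule acyclic_below_remove_redundant[of "{0..<length xs}"])
      fix k assume "k \<in> {0..<length xs}"
      then show "list_seq R (xs @ ys) k \<in> Idl (list_seq R (xs @ ys) ` {length xs..<length xs + length ys})"
        unfolding img using red by (auto simp: list_seq_def nth_append)
    qed (use a un in auto)
    then show "acyclic_below R M (list_seq R ys) {0..<length ys} n"
      using acyclic_below_list_seq_shift[OF xs ys] by simp
  qed
qed

lemma Kgrade_gens_mono_genideal:
  assumes "set xs \<subseteq> carrier R" "set ys \<subseteq> carrier R" "set xs \<subseteq> Idl (set ys)"
  shows "Kgrade_gens R xs M \<le> Kgrade_gens R ys M"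
  using Kgrade_gens_le_append_right[OF assms(1,2)] Kgrade_gens_append_le_if_redundant[OF assms]
  by (rule order_trans)

end

section \<open>The amalgamation and its Koszul complexes\<close>

lemma finsum_self_module: "finsum (self_module Q) g T = finsum Q g T"
  by (simp add: finsum_def finprod_def self_module_def)

lemma self_module_simps[simp]:
  "carrier (self_module Q) = carrier Q" "x \<oplus>\<^bsub>self_module Q\<^esub> y = x \<oplus>\<^bsub>Q\<^esub> y"
  "\<zero>\<^bsub>self_module Q\<^esub> = \<zero>\<^bsub>Q\<^esub>" "x \<odot>\<^bsub>self_module Q\<^esub> y = x \<otimes>\<^bsub>Q\<^esub> y"
  by (simp_all add: self_module_def)

lemma module_self_module:
  assumes "cring Q"
  shows "module Q (self_module Q)"
proof -
  interpret cring Q by fact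
  have "abelian_group (self_module Q)"
  proof (rule abelian_groupI)
    fix x assume "x \<in> carrier (self_module Q)"
    then show "\<exists>y\<in>carrier (self_module Q). y \<oplus>\<^bsub>self_module Q\<^esub> x = \<zero>\<^bsub>self_module Q\<^esub>"
      by (intro bexI[of _ "\<ominus>\<^bsub>Q\<^esub> x"]) (simp_all add: l_neg)
  next
    fix x y z assume "x \<in> carrier (self_module Q)" "y \<in> carrier (self_module Q)" "z \<in> carrier (self_module Q)"
    then show "x \<oplus>\<^bsub>self_module Q\<^esub> y \<oplus>\<^bsub>self_module Q\<^esub> z = x \<oplus>\<^bsub>self_module Q\<^esub> (y \<oplus>\<^bsub>self_module Q\<^esub> z)"
      by (simp add: a_assoc)
  next
    fix x y assume "x \<in> carrier (self_module Q)" "y \<in> carrier (self_module Q)"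
    then show "x \<oplus>\<^bsub>self_module Q\<^esub> y = y \<oplus>\<^bsub>self_module Q\<^esub> x" by (simp add: a_comm)
  qed simp_all
  then show ?thesis by (intro moduleI assms) (auto simp: l_distr r_distr m_assoc)
qed

locale amalg = ring_hom_cring A B f for A (structure) and B (structure) and f +
  fixes J assumes ideal_J: "ideal J B"
begin

sublocale J: ideal J B by (rule ideal_J)

abbreviation "AJ \<equiv> amalgamation A B f J"
abbreviation "A_mod \<equiv> self_module A"
abbreviation "AJ_mod \<equiv> self_module AJ"
abbreviation "J_mod \<equiv> ideal_module_via A B f J"
abbreviation "\<iota> \<equiv> (\<lambda>a. (a, f a))"

lemma J_carrier: "j \<in> J \<Longrightarrow> j \<in> carrier B"
  using J.Icarr by blast

lemma zero_in_J[simp]: "\<zero>\<^bsub>B\<^esub> \<in> J"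
  by (simp add: J.additive_subgroup_axioms additive_subgroup.zero_closed)

lemma J_mod_simps[simp]:
  "carrier J_mod = J" "x \<oplus>\<^bsub>J_mod\<^esub> y = x \<oplus>\<^bsub>B\<^esub> y" "\<zero>\<^bsub>J_mod\<^esub> = \<zero>\<^bsub>B\<^esub>" "a \<odot>\<^bsub>J_mod\<^esub> y = f a \<otimes>\<^bsub>B\<^esub> y"
  by (simp_all add: ideal_module_via_def)

lemma abelian_group_J_mod: "abelian_group J_mod"
proof (rule abelian_groupI)
  fix x assume "x \<in> carrier J_mod"
  then show "\<exists>y\<in>carrier J_mod. y \<oplus>\<^bsub>J_mod\<^esub> x = \<zero>\<^bsub>J_mod\<^esub>"
    using J_carrier[of x] by (intro bexI[of _ "\<ominus>\<^bsub>B\<^esub> x"]) (auto simp: S.l_neg J.a_inv_closed)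
next
  fix x y z assume "x \<in> carrier J_mod" "y \<in> carrier J_mod" "z \<in> carrier J_mod"
  then show "x \<oplus>\<^bsub>J_mod\<^esub> y \<oplus>\<^bsub>J_mod\<^esub> z = x \<oplus>\<^bsub>J_mod\<^esub> (y \<oplus>\<^bsub>J_mod\<^esub> z)"
    using J_carrier by (simp add: S.a_assoc)
next
  fix x y assume "x \<in> carrier J_mod" "y \<in> carrier J_mod"
  then show "x \<oplus>\<^bsub>J_mod\<^esub> y = y \<oplus>\<^bsub>J_mod\<^esub> x" using J_carrier by (simp add: S.a_comm)
qed (auto simp: J.a_closed J_carrier)

lemma module_J_mod: "module A J_mod"
  by (intro moduleI R.is_cring abelian_group_J_mod)
    (auto simp: J.I_l_closed J_carrier S.l_distr S.r_distr S.m_assoc)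

lemma finsum_J_mod:
  assumes "g \<in> T \<rightarrow> J"
  shows "finsum J_mod g T = finsum B g T"
proof -
  interpret J_mod: abelian_group J_mod by (rule abelian_group_J_mod)
  show ?thesis using assms
  proof (induction T rule: infinite_finite_induct)
    case (insert a F)
    have "g \<in> F \<rightarrow> J" "g a \<in> J" using insert by auto
    then show ?case
      using insert J_mod.finsum_insert[of F a g] S.finsum_insert[of F a g] J_carrier by (auto simp: Pi_def)
  qed simp_all
qed

lemma amalgamation_simps[simp]:
  "x \<oplus>\<^bsub>AJ\<^esub> y = (fst x \<oplus>\<^bsub>A\<^esub> fst y, snd x \<oplus>\<^bsub>B\<^esub> snd y)"
  "x \<otimes>\<^bsub>AJ\<^esub> y = (fst x \<otimes>\<^bsub>A\<^esub> fst y, snd x \<otimes>\<^bsub>B\<^esub> snd y)"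
  "\<one>\<^bsub>AJ\<^esub> = (\<one>\<^bsub>A\<^esub>, \<one>\<^bsub>B\<^esub>)" "\<zero>\<^bsub>AJ\<^esub> = (\<zero>\<^bsub>A\<^esub>, \<zero>\<^bsub>B\<^esub>)"
  by (simp_all add: amalgamation_def)

lemma amalgamation_memI: "a \<in> carrier A \<Longrightarrow> j \<in> J \<Longrightarrow> (a, f a \<oplus>\<^bsub>B\<^esub> j) \<in> carrier AJ"
  by (auto simp: amalgamation_def)

lemma amalgamation_mem_iff:
  "p \<in> carrier AJ \<longleftrightarrow> fst p \<in> carrier A \<and> snd p \<in> carrier B \<and> snd p \<ominus>\<^bsub>B\<^esub> f (fst p) \<in> J"
proof
  assume "p \<in> carrier AJ"
  then obtain a j where p: "p = (a, f a \<oplus>\<^bsub>B\<^esub> j)" "a \<in> carrier A" "j \<in> J" by (auto simp: amalgamation_def)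
  then have "f a \<oplus>\<^bsub>B\<^esub> j \<ominus>\<^bsub>B\<^esub> f a = j" using J_carrier[of j] by (simp add: a_minus_def S.a_comm S.a_lcomm S.r_neg)
  then show "fst p \<in> carrier A \<and> snd p \<in> carrier B \<and> snd p \<ominus>\<^bsub>B\<^esub> f (fst p) \<in> J" using p J_carrier by auto
next
  assume h: "fst p \<in> carrier A \<and> snd p \<in> carrier B \<and> snd p \<ominus>\<^bsub>B\<^esub> f (fst p) \<in> J"
  then have "snd p = f (fst p) \<oplus>\<^bsub>B\<^esub> (snd p \<ominus>\<^bsub>B\<^esub> f (fst p))" by (simp add: a_minus_def S.a_lcomm S.r_neg)
  then have p: "p = (fst p, f (fst p) \<oplus>\<^bsub>B\<^esub> (snd p \<ominus>\<^bsub>B\<^esub> f (fst p)))" by (simp add: prod_eq_iff)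
  show "p \<in> carrier AJ" by (subst p) (rule amalgamation_memI, use h in auto)
qed

lemma amalgamation_memD: "p \<in> carrier AJ \<Longrightarrow> fst p \<in> carrier A \<and> snd p \<in> carrier B"
  by (simp add: amalgamation_mem_iff)

lemma iota_in_amalgamation[simp]: "a \<in> carrier A \<Longrightarrow> (a, f a) \<in> carrier AJ"
  using amalgamation_memI[of a "\<zero>\<^bsub>B\<^esub>"] by simp

lemma abelian_group_amalgamation: "abelian_group AJ"
proof (rule abelian_groupI)
  fix x y assume "x \<in> carrier AJ" "y \<in> carrier AJ"
  then obtain a j b k where xy: "x = (a, f a \<oplus>\<^bsub>B\<^esub> j)" "a \<in> carrier A" "j \<in> J"
    "y = (b, f b \<oplus>\<^bsub>B\<^esub> k)" "b \<in> carrier A" "k \<in> J" by (auto simp: amalgamation_def)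
  have "(f a \<oplus>\<^bsub>B\<^esub> j) \<oplus>\<^bsub>B\<^esub> (f b \<oplus>\<^bsub>B\<^esub> k) = f (a \<oplus>\<^bsub>A\<^esub> b) \<oplus>\<^bsub>B\<^esub> (j \<oplus>\<^bsub>B\<^esub> k)"
    using xy J_carrier by (simp add: S.a_ac)
  then show "x \<oplus>\<^bsub>AJ\<^esub> y \<in> carrier AJ" using xy amalgamation_memI[OF R.a_closed J.a_closed] by simp
  show "x \<oplus>\<^bsub>AJ\<^esub> y = y \<oplus>\<^bsub>AJ\<^esub> x" using xy J_carrier by (simp add: R.a_comm S.a_comm)
next
  fix x assume x: "x \<in> carrier AJ"
  then show "\<zero>\<^bsub>AJ\<^esub> \<oplus>\<^bsub>AJ\<^esub> x = x" using amalgamation_memD by (simp add: prod_eq_iff)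
  obtain a j where xa: "x = (a, f a \<oplus>\<^bsub>B\<^esub> j)" "a \<in> carrier A" "j \<in> J" using x by (auto simp: amalgamation_def)
  have "(\<ominus>\<^bsub>A\<^esub> a, f (\<ominus>\<^bsub>A\<^esub> a) \<oplus>\<^bsub>B\<^esub> \<ominus>\<^bsub>B\<^esub> j) \<in> carrier AJ"
    using xa by (intro amalgamation_memI) (auto simp: J.a_inv_closed)
  moreover have "(\<ominus>\<^bsub>A\<^esub> a, f (\<ominus>\<^bsub>A\<^esub> a) \<oplus>\<^bsub>B\<^esub> \<ominus>\<^bsub>B\<^esub> j) \<oplus>\<^bsub>AJ\<^esub> x = \<zero>\<^bsub>AJ\<^esub>"
    using xa J_carrier[of j] by (simp add: R.l_neg ring.hom_a_inv S.a_ac S.r_neg S.minus_add)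
  ultimately show "\<exists>y\<in>carrier AJ. y \<oplus>\<^bsub>AJ\<^esub> x = \<zero>\<^bsub>AJ\<^esub>" by blast
next
  show "\<zero>\<^bsub>AJ\<^esub> \<in> carrier AJ" using amalgamation_memI[of "\<zero>\<^bsub>A\<^esub>" "\<zero>\<^bsub>B\<^esub>"] by simp
next
  fix x y z assume "x \<in> carrier AJ" "y \<in> carrier AJ" "z \<in> carrier AJ"
  then show "x \<oplus>\<^bsub>AJ\<^esub> y \<oplus>\<^bsub>AJ\<^esub> z = x \<oplus>\<^bsub>AJ\<^esub> (y \<oplus>\<^bsub>AJ\<^esub> z)"
    using amalgamation_memD by (simp add: R.a_assoc S.a_assoc)
qed

lemma comm_monoid_amalgamation: "comm_monoid AJ"
proof (rule comm_monoidI)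
  fix x y assume "x \<in> carrier AJ" "y \<in> carrier AJ"
  then obtain a j b k where xy: "x = (a, f a \<oplus>\<^bsub>B\<^esub> j)" "a \<in> carrier A" "j \<in> J"
    "y = (b, f b \<oplus>\<^bsub>B\<^esub> k)" "b \<in> carrier A" "k \<in> J" by (auto simp: amalgamation_def)
  have jk: "j \<in> carrier B" "k \<in> carrier B" using xy J_carrier by auto
  have "(f a \<oplus>\<^bsub>B\<^esub> j) \<otimes>\<^bsub>B\<^esub> (f b \<oplus>\<^bsub>B\<^esub> k)
      = f (a \<otimes>\<^bsub>A\<^esub> b) \<oplus>\<^bsub>B\<^esub> ((f a \<otimes>\<^bsub>B\<^esub> k \<oplus>\<^bsub>B\<^esub> j \<otimes>\<^bsub>B\<^esub> f b) \<oplus>\<^bsub>B\<^esub> j \<otimes>\<^bsub>B\<^esub> k)"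
    using xy jk by (simp add: S.l_distr S.r_distr S.a_ac)
  moreover have "(f a \<otimes>\<^bsub>B\<^esub> k \<oplus>\<^bsub>B\<^esub> j \<otimes>\<^bsub>B\<^esub> f b) \<oplus>\<^bsub>B\<^esub> j \<otimes>\<^bsub>B\<^esub> k \<in> J"
    using xy jk by (intro J.a_closed J.I_l_closed J.I_r_closed) auto
  ultimately show "x \<otimes>\<^bsub>AJ\<^esub> y \<in> carrier AJ"
    using xy amalgamation_memI[OF R.m_closed[OF xy(2) xy(5)]] by (simp del: hom_mult)
  show "x \<otimes>\<^bsub>AJ\<^esub> y = y \<otimes>\<^bsub>AJ\<^esub> x" using xy jk by (simp add: R.m_comm S.m_comm)
next
  show "\<one>\<^bsub>AJ\<^esub> \<in> carrier AJ" using amalgamation_memI[of "\<one>\<^bsub>A\<^esub>" "\<zero>\<^bsub>B\<^esub>"] by simp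
next
  fix x y z assume "x \<in> carrier AJ" "y \<in> carrier AJ" "z \<in> carrier AJ"
  then show "x \<otimes>\<^bsub>AJ\<^esub> y \<otimes>\<^bsub>AJ\<^esub> z = x \<otimes>\<^bsub>AJ\<^esub> (y \<otimes>\<^bsub>AJ\<^esub> z)"
    using amalgamation_memD by (simp add: R.m_assoc S.m_assoc)
next
  fix x assume "x \<in> carrier AJ"
  then show "\<one>\<^bsub>AJ\<^esub> \<otimes>\<^bsub>AJ\<^esub> x = x" using amalgamation_memD by (simp add: prod_eq_iff)
qed

lemma cring_amalgamation: "cring AJ"
proof (rule cringI[OF abelian_group_amalgamation comm_monoid_amalgamation])
  fix x y z assume "x \<in> carrier AJ" "y \<in> carrier AJ" "z \<in> carrier AJ"
  then show "(x \<oplus>\<^bsub>AJ\<^esub> y) \<otimes>\<^bsub>AJ\<^esub> z = x \<otimes>\<^bsub>AJ\<^esub> z \<oplus>\<^bsub>AJ\<^esub> y \<otimes>\<^bsub>AJ\<^esub> z"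
    using amalgamation_memD by (simp add: R.l_distr S.l_distr)
qed

sublocale AJ: cring AJ by (rule cring_amalgamation)

lemma a_inv_amalgamation:
  assumes p: "p \<in> carrier AJ"
  shows "\<ominus>\<^bsub>AJ\<^esub> p = (\<ominus>\<^bsub>A\<^esub> fst p, \<ominus>\<^bsub>B\<^esub> snd p)"
proof (rule AJ.minus_equality)
  have pc: "fst p \<in> carrier A" "snd p \<in> carrier B" "snd p \<ominus>\<^bsub>B\<^esub> f (fst p) \<in> J"
    using p by (auto simp: amalgamation_mem_iff)
  have "\<ominus>\<^bsub>B\<^esub> snd p \<ominus>\<^bsub>B\<^esub> f (\<ominus>\<^bsub>A\<^esub> fst p) = \<ominus>\<^bsub>B\<^esub> (snd p \<ominus>\<^bsub>B\<^esub> f (fst p))"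
    using pc by (simp add: a_minus_def ring.hom_a_inv S.minus_add)
  then show "(\<ominus>\<^bsub>A\<^esub> fst p, \<ominus>\<^bsub>B\<^esub> snd p) \<in> carrier AJ"
    using pc by (simp add: amalgamation_mem_iff J.a_inv_closed)
  show "(\<ominus>\<^bsub>A\<^esub> fst p, \<ominus>\<^bsub>B\<^esub> snd p) \<oplus>\<^bsub>AJ\<^esub> p = \<zero>\<^bsub>AJ\<^esub>" using pc by (simp add: R.l_neg S.l_neg)
qed (rule p)

lemma alt_sign_amalgamation: "alt_sign AJ b = (alt_sign A b, f (alt_sign A b))"
proof -
  have "(\<one>\<^bsub>A\<^esub>, \<one>\<^bsub>B\<^esub>) \<in> carrier AJ" using AJ.one_closed by simp
  then show ?thesis by (cases b) (simp_all add: alt_sign_def a_inv_amalgamation ring.hom_a_inv)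
qed

lemma finsum_amalgamation:
  assumes "g \<in> T \<rightarrow> carrier AJ"
  shows "finsum AJ g T = (finsum A (\<lambda>j. fst (g j)) T, finsum B (\<lambda>j. snd (g j)) T)"
  using assms
proof (induction T rule: infinite_finite_induct)
  case (insert a F)
  then have "g \<in> F \<rightarrow> carrier AJ" "g a \<in> carrier AJ" by auto
  moreover from this have "(\<lambda>j. fst (g j)) \<in> F \<rightarrow> carrier A" "(\<lambda>j. snd (g j)) \<in> F \<rightarrow> carrier B"
    "fst (g a) \<in> carrier A" "snd (g a) \<in> carrier B" by (auto simp: Pi_def amalgamation_mem_iff)
  ultimately show ?case using insert AJ.finsum_insert[of F a g] by (simp add: R.finsum_insert S.finsum_insert)
qed simp_all

end

text \<open>The \<open>A\<close>-module isomorphism \<open>A \<bowtie>\<^sup>f J \<cong> A \<oplus> J\<close>, \<open>(a, b) \<mapsto> (a, b - f a)\<close>, applied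
  pointwise to cochains.\<close>

definition fst_part :: "(nat set \<Rightarrow> 'a \<times> 'b) \<Rightarrow> nat set \<Rightarrow> 'a" where
  "fst_part \<phi> = (\<lambda>T. fst (\<phi> T))"

definition J_part :: "('b,'d) ring_scheme \<Rightarrow> ('a \<Rightarrow> 'b) \<Rightarrow> (nat set \<Rightarrow> 'a \<times> 'b) \<Rightarrow> nat set \<Rightarrow> 'b" where
  "J_part B f \<phi> = (\<lambda>T. snd (\<phi> T) \<ominus>\<^bsub>B\<^esub> f (fst (\<phi> T)))"

definition amalg_join :: "('b,'d) ring_scheme \<Rightarrow> ('a \<Rightarrow> 'b) \<Rightarrow> (nat set \<Rightarrow> 'a) \<Rightarrow> (nat set \<Rightarrow> 'b)
    \<Rightarrow> nat set \<Rightarrow> 'a \<times> 'b" where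
  "amalg_join B f \<alpha> \<beta> = (\<lambda>T. (\<alpha> T, f (\<alpha> T) \<oplus>\<^bsub>B\<^esub> \<beta> T))"

locale amalg_seq = amalg + fixes x :: "nat \<Rightarrow> 'a" assumes x_closed[simp]: "x j \<in> carrier A"
begin

abbreviation "xe \<equiv> (\<lambda>j. (x j, f (x j)))"

sublocale KA: koszul_seq A A_mod x
  by (intro koszul_seq.intro module_self_module R.is_cring koszul_seq_axioms.intro x_closed)
sublocale KJ: koszul_seq A J_mod x
  by (intro koszul_seq.intro module_J_mod koszul_seq_axioms.intro x_closed)
sublocale KAJ: koszul_seq AJ AJ_mod xe
  by (intro koszul_seq.intro module_self_module cring_amalgamation koszul_seq_axioms.intro iota_in_amalgamation x_closed)

lemma fst_part_cochains: "\<phi> \<in> cochains AJ_mod I i \<Longrightarrow> fst_part \<phi> \<in> cochains A_mod I i"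
  unfolding cochains_def fst_part_def by (auto simp: amalgamation_mem_iff)

lemma J_part_cochains: "\<phi> \<in> cochains AJ_mod I i \<Longrightarrow> J_part B f \<phi> \<in> cochains J_mod I i"
  unfolding cochains_def J_part_def by (auto simp: amalgamation_mem_iff)

lemma amalg_join_cochains: "\<alpha> \<in> cochains A_mod I i \<Longrightarrow> \<beta> \<in> cochains J_mod I i \<Longrightarrow> amalg_join B f \<alpha> \<beta> \<in> cochains AJ_mod I i"
  unfolding cochains_def amalg_join_def by (auto intro: amalgamation_memI)

lemma amalg_join_parts:
  assumes \<phi>: "\<phi> \<in> cochains AJ_mod I i"
  shows "amalg_join B f (fst_part \<phi>) (J_part B f \<phi>) = \<phi>"
proof
  fix T
  have "\<phi> T \<in> carrier AJ" using KAJ.cochains_carrier[OF \<phi>] by simp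
  then have "fst (\<phi> T) \<in> carrier A" "snd (\<phi> T) \<in> carrier B" by (auto simp: amalgamation_mem_iff)
  then show "amalg_join B f (fst_part \<phi>) (J_part B f \<phi>) T = \<phi> T"
    by (simp add: amalg_join_def fst_part_def J_part_def a_minus_def S.a_lcomm S.r_neg prod_eq_iff)
qed

lemma fst_part_amalg_join[simp]: "fst_part (amalg_join B f \<alpha> \<beta>) = \<alpha>"
  by (simp add: fst_part_def amalg_join_def)

lemma J_part_amalg_join[simp]:
  assumes "\<alpha> \<in> cochains A_mod I i" "\<beta> \<in> cochains J_mod I i"
  shows "J_part B f (amalg_join B f \<alpha> \<beta>) = \<beta>"
  using KA.cochains_carrier[OF assms(1)] KJ.cochains_carrier[OF assms(2)] J_carrier
  by (auto simp: fun_eq_iff J_part_def amalg_join_def a_minus_def S.a_comm S.a_lcomm S.r_neg)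

lemma fst_part_czero[simp]: "fst_part (czero AJ_mod) = czero A_mod"
  by (simp add: fst_part_def czero_def)

lemma J_part_czero[simp]: "J_part B f (czero AJ_mod) = czero J_mod"
  by (simp add: J_part_def czero_def a_minus_def)

lemma amalg_join_czero[simp]: "amalg_join B f (czero A_mod) (czero J_mod) = czero AJ_mod"
  by (simp add: amalg_join_def czero_def)

lemma kcoef_amalgamation: "kcoef AJ xe T j = (kcoef A x T j, f (kcoef A x T j))"
  by (simp add: kcoef_def alt_sign_amalgamation)

lemma kdiff_amalg_join:
  assumes \<alpha>: "\<alpha> \<in> cochains A_mod I i" and \<beta>: "\<beta> \<in> cochains J_mod I i"
  shows "kdiff AJ AJ_mod xe I i (amalg_join B f \<alpha> \<beta>) = amalg_join B f (kdiff A A_mod x I i \<alpha>) (kdiff A J_mod x I i \<beta>)"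
proof
  fix T
  let ?c = "kcoef A x T"
  have a: "\<alpha> T' \<in> carrier A" and b: "\<beta> T' \<in> J" for T'
    using KA.cochains_carrier[OF \<alpha>] KJ.cochains_carrier[OF \<beta>] by auto
  define g where "g j = (?c j \<otimes>\<^bsub>A\<^esub> \<alpha> (T - {j}), f (?c j) \<otimes>\<^bsub>B\<^esub> f (\<alpha> (T - {j})) \<oplus>\<^bsub>B\<^esub> f (?c j) \<otimes>\<^bsub>B\<^esub> \<beta> (T - {j}))" for j
  have g: "g \<in> T \<rightarrow> carrier AJ"
    using a b amalgamation_memI[OF _ J.I_l_closed] by (auto simp: g_def simp flip: hom_mult)
  have "(\<Oplus>\<^bsub>AJ_mod\<^esub> j\<in>T. kcoef AJ xe T j \<odot>\<^bsub>AJ_mod\<^esub> amalg_join B f \<alpha> \<beta> (T - {j})) = finsum AJ g T"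
    unfolding finsum_self_module using a b J_carrier
    by (intro AJ.finsum_cong') (auto simp: kcoef_amalgamation g_def amalg_join_def S.r_distr g)
  also have "\<dots> = (\<Oplus>\<^bsub>A\<^esub> j\<in>T. ?c j \<otimes>\<^bsub>A\<^esub> \<alpha> (T - {j}),
      f (\<Oplus>\<^bsub>A\<^esub> j\<in>T. ?c j \<otimes>\<^bsub>A\<^esub> \<alpha> (T - {j})) \<oplus>\<^bsub>B\<^esub> (\<Oplus>\<^bsub>B\<^esub> j\<in>T. f (?c j) \<otimes>\<^bsub>B\<^esub> \<beta> (T - {j})))"
    using a b J_carrier by (simp add: finsum_amalgamation[OF g] g_def S.finsum_addf Pi_def comp_def)
  also have "(\<Oplus>\<^bsub>B\<^esub> j\<in>T. f (?c j) \<otimes>\<^bsub>B\<^esub> \<beta> (T - {j})) = (\<Oplus>\<^bsub>J_mod\<^esub> j\<in>T. ?c j \<odot>\<^bsub>J_mod\<^esub> \<beta> (T - {j}))"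
    using b by (simp add: finsum_J_mod J.I_l_closed Pi_def)
  finally show "kdiff AJ AJ_mod xe I i (amalg_join B f \<alpha> \<beta>) T
      = amalg_join B f (kdiff A A_mod x I i \<alpha>) (kdiff A J_mod x I i \<beta>) T"
    by (auto simp: kdiff_def amalg_join_def finsum_self_module)
qed

lemma kdiff_amalgamation:
  assumes "\<phi> \<in> cochains AJ_mod I i"
  shows "kdiff AJ AJ_mod xe I i \<phi>
    = amalg_join B f (kdiff A A_mod x I i (fst_part \<phi>)) (kdiff A J_mod x I i (J_part B f \<phi>))"
  using kdiff_amalg_join[OF fst_part_cochains[OF assms] J_part_cochains[OF assms]] amalg_join_parts[OF assms]
  by simp

lemma kdiff_fst_part:
  "\<phi> \<in> cochains AJ_mod I i \<Longrightarrow> fst_part (kdiff AJ AJ_mod xe I i \<phi>) = kdiff A A_mod x I i (fst_part \<phi>)"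
  by (simp add: kdiff_amalgamation)

lemma kdiff_J_part:
  "\<phi> \<in> cochains AJ_mod I i \<Longrightarrow> J_part B f (kdiff AJ AJ_mod xe I i \<phi>) = kdiff A J_mod x I i (J_part B f \<phi>)"
  using kdiff_amalgamation J_part_amalg_join[OF KA.kdiff_cochains[OF fst_part_cochains] KJ.kdiff_cochains[OF J_part_cochains]]
  by simp

lemma cohom_nonzero_amalg_if_summand:
  assumes "cohom_nonzero A A_mod x I i \<or> cohom_nonzero A J_mod x I i"
  shows "cohom_nonzero AJ AJ_mod xe I i"
  using assms
proof
  assume "cohom_nonzero A A_mod x I i"
  then show ?thesis
    by (rule cohom_nonzero_transfer[where F = "\<lambda>\<alpha>. amalg_join B f \<alpha> (czero J_mod)" and G = fst_part])
      (simp_all add: amalg_join_cochains fst_part_cochains kdiff_amalg_join kdiff_fst_part)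
next
  assume "cohom_nonzero A J_mod x I i"
  then show ?thesis
    by (rule cohom_nonzero_transfer[where F = "amalg_join B f (czero A_mod)" and G = "J_part B f"])
      (simp_all add: amalg_join_cochains J_part_cochains kdiff_amalg_join kdiff_J_part)
qed

lemma cohom_nonzero_summand_if_amalg:
  assumes "cohom_nonzero AJ AJ_mod xe I i"
  shows "cohom_nonzero A A_mod x I i \<or> cohom_nonzero A J_mod x I i"
proof (rule ccontr)
  obtain \<phi> where \<phi>: "\<phi> \<in> cochains AJ_mod I i" and d: "kdiff AJ AJ_mod xe I i \<phi> = czero AJ_mod"
    and nb: "\<phi> \<notin> coboundaries AJ AJ_mod xe I i" using assms by (auto simp: cohom_nonzero_def)
  assume "\<not> (cohom_nonzero A A_mod x I i \<or> cohom_nonzero A J_mod x I i)"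
  then have b1: "fst_part \<phi> \<in> coboundaries A A_mod x I i" and b2: "J_part B f \<phi> \<in> coboundaries A J_mod x I i"
    using kdiff_fst_part[OF \<phi>] kdiff_J_part[OF \<phi>] d fst_part_cochains[OF \<phi>] J_part_cochains[OF \<phi>]
    by (auto simp: cohom_nonzero_def)
  have "\<phi> \<in> coboundaries AJ AJ_mod xe I i"
  proof (cases "i = 0")
    case True
    then show ?thesis using b1 b2 amalg_join_parts[OF \<phi>] by (simp add: coboundaries_0)
  next
    case False
    obtain \<psi>1 \<psi>2 where \<psi>1: "\<psi>1 \<in> cochains A_mod I (i - 1)" "fst_part \<phi> = kdiff A A_mod x I (i - 1) \<psi>1"
      and \<psi>2: "\<psi>2 \<in> cochains J_mod I (i - 1)" "J_part B f \<phi> = kdiff A J_mod x I (i - 1) \<psi>2"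
      using b1 b2 False by (auto simp: coboundaries_pos)
    then have "\<phi> = kdiff AJ AJ_mod xe I (i - 1) (amalg_join B f \<psi>1 \<psi>2)"
      using amalg_join_parts[OF \<phi>] kdiff_amalg_join by simp
    then show ?thesis using amalg_join_cochains[OF \<psi>1(1) \<psi>2(1)] False by (auto simp: coboundaries_pos)
  qed
  then show False using nb by simp
qed

lemma Kgrade_seq_amalg:
  "Kgrade_seq AJ AJ_mod xe I = min (Kgrade_seq A A_mod x I) (Kgrade_seq A J_mod x I)"
proof -
  have "{i. cohom_nonzero AJ AJ_mod xe I i} = {i. cohom_nonzero A A_mod x I i} \<union> {i. cohom_nonzero A J_mod x I i}"
    using cohom_nonzero_amalg_if_summand cohom_nonzero_summand_if_amalg by blast
  then show ?thesis unfolding Kgrade_seq_def by (simp add: INF_union inf_enat_def)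
qed

end

section \<open>Koszul grade over the amalgamation\<close>

lemma (in ring) genideal_finite_subset:
  assumes S: "S \<subseteq> carrier R" and y: "y \<in> Idl S"
  shows "\<exists>F. finite F \<and> F \<subseteq> S \<and> y \<in> Idl F"
proof -
  define K where "K = (\<Union>F \<in> {F. finite F \<and> F \<subseteq> S}. Idl F)"
  have ideal_F: "ideal (Idl F) R" if "F \<subseteq> S" for F using that S by (intro genideal_ideal) auto
  have K: "\<exists>F. finite F \<and> F \<subseteq> S \<and> a \<in> Idl F" if "a \<in> K" for a using that by (auto simp: K_def)
  have "ideal K R"
  proof (rule idealI[OF ring_axioms])
    show "subgroup K (add_monoid R)"
    proof (rule add.subgroupI)
      show "K \<subseteq> carrier R" using K ideal.Icarr[OF ideal_F] by blast
      have "\<zero> \<in> Idl {}" using ideal_F[of "{}"] by (simp add: additive_subgroup.zero_closed ideal.axioms(1))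
      then show "K \<noteq> {}" by (auto simp: K_def)
      fix a b assume "a \<in> K" "b \<in> K"
      then obtain F G where F: "finite F" "F \<subseteq> S" "a \<in> Idl F" and G: "finite G" "G \<subseteq> S" "b \<in> Idl G"
        using K by meson
      have "\<ominus> a \<in> Idl F" using ideal_F[OF F(2)] F(3) by (simp add: additive_subgroup.a_inv_closed ideal.axioms(1))
      then show "\<ominus> a \<in> K" using F by (auto simp: K_def)
      have FG: "F \<union> G \<subseteq> S" using F G by simp
      have "Idl F \<subseteq> Idl (F \<union> G)" by (rule subset_Idl_subset) (use FG S in auto)
      moreover have "Idl G \<subseteq> Idl (F \<union> G)" by (rule subset_Idl_subset) (use FG S in auto)
      ultimately have "a \<in> Idl (F \<union> G)" "b \<in> Idl (F \<union> G)" using F(3) G(3) by auto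
      then have "a \<oplus> b \<in> Idl (F \<union> G)"
        using ideal_F[OF FG] by (simp add: additive_subgroup.a_closed ideal.axioms(1))
      then show "a \<oplus> b \<in> K" using F G FG by (auto simp: K_def)
    qed
    fix a r assume a: "a \<in> K" and r: "r \<in> carrier R"
    then obtain F where F: "finite F" "F \<subseteq> S" "a \<in> Idl F" using K by meson
    then have "r \<otimes> a \<in> Idl F" "a \<otimes> r \<in> Idl F"
      using ideal.I_l_closed[OF ideal_F] ideal.I_r_closed[OF ideal_F] r by auto
    then show "r \<otimes> a \<in> K" "a \<otimes> r \<in> K" using F by (auto simp: K_def)
  qed
  moreover have "S \<subseteq> K"
  proof
    fix s assume "s \<in> S"
    then have "s \<in> Idl {s}" "finite {s}" "{s} \<subseteq> S" using S by (auto intro: genideal_self')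
    then show "s \<in> K" by (auto simp: K_def)
  qed
  ultimately have "Idl S \<subseteq> K" by (rule genideal_minimal)
  then show ?thesis using y K by blast
qed

lemma (in ring) genideal_finite_subset_list:
  assumes S: "S \<subseteq> carrier R"
  shows "set ys \<subseteq> Idl S \<Longrightarrow> \<exists>F. finite F \<and> F \<subseteq> S \<and> set ys \<subseteq> Idl F"
proof (induction ys)
  case (Cons y ys)
  obtain F where F: "finite F" "F \<subseteq> S" "set ys \<subseteq> Idl F" using Cons by auto
  obtain G where G: "finite G" "G \<subseteq> S" "y \<in> Idl G" using genideal_finite_subset[OF S, of y] Cons.prems by auto
  have "Idl F \<subseteq> Idl (F \<union> G)" by (rule subset_Idl_subset) (use F G S in auto)
  moreover have "Idl G \<subseteq> Idl (F \<union> G)" by (rule subset_Idl_subset) (use F G S in auto)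
  ultimately show ?case using F G by (intro exI[of _ "F \<union> G"]) auto
qed auto

context amalg
begin

lemma Kgrade_gens_amalg:
  assumes xs: "set xs \<subseteq> carrier A"
  shows "Kgrade_gens AJ (map \<iota> xs) AJ_mod = min (Kgrade_gens A xs A_mod) (Kgrade_gens A xs J_mod)"
proof -
  have "list_seq A xs j \<in> carrier A" for j using xs by (auto simp: list_seq_def)
  then interpret amalg_seq A B f J "list_seq A xs" by unfold_locales
  have "set (map \<iota> xs) \<subseteq> carrier AJ" using xs by auto
  moreover have "list_seq AJ (map \<iota> xs) = (\<lambda>j. (list_seq A xs j, f (list_seq A xs j)))"
    by (auto simp: list_seq_def fun_eq_iff)
  ultimately show ?thesis
    using Kgrade_seq_amalg xs
    by (simp add: module.Kgrade_gens_eq_Kgrade_seq[OF KAJ.module_axioms]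
        module.Kgrade_gens_eq_Kgrade_seq[OF KA.module_axioms] module.Kgrade_gens_eq_Kgrade_seq[OF KJ.module_axioms])
qed

lemma iota_image_subset_amalg_ext: "I \<subseteq> carrier A \<Longrightarrow> \<iota> ` I \<subseteq> amalg_ext A B f J I"
  unfolding amalg_ext_def by (rule AJ.genideal_self) auto

lemma Kgrade_amalg_ext_le:
  assumes I: "I \<subseteq> carrier A"
  shows "Kgrade AJ (amalg_ext A B f J I) AJ_mod \<le> Kgrade A I A_mod"
  unfolding Kgrade_def[of AJ]
proof (rule SUP_least)
  fix ys assume "ys \<in> {ys. set ys \<subseteq> amalg_ext A B f J I}"
  then have ys: "set ys \<subseteq> Idl\<^bsub>AJ\<^esub> (\<iota> ` I)" by (simp add: amalg_ext_def)
  have \<iota>I: "\<iota> ` I \<subseteq> carrier AJ" using I by auto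
  then have ys_carrier: "set ys \<subseteq> carrier AJ" using ys ideal.Icarr[OF AJ.genideal_ideal] by blast
  obtain F where F: "finite F" "F \<subseteq> \<iota> ` I" "set ys \<subseteq> Idl\<^bsub>AJ\<^esub> F"
    using AJ.genideal_finite_subset_list[OF \<iota>I ys] by blast
  obtain C where C: "C \<subseteq> I" "finite C" "F = \<iota> ` C" using finite_subset_image[OF F(1,2)] by blast
  obtain xs where xs: "set xs = C" using finite_list[OF C(2)] by blast
  have xs_I: "set xs \<subseteq> I" and xs_A: "set xs \<subseteq> carrier A" using xs C(1) I by auto
  have map_xs: "set (map \<iota> xs) = F" using xs C(3) by simp
  have "Kgrade_gens AJ ys AJ_mod \<le> Kgrade_gens AJ (map \<iota> xs) AJ_mod"
    by (rule module.Kgrade_gens_mono_genideal[OF module_self_module[OF cring_amalgamation] ys_carrier])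
      (use map_xs F(2,3) \<iota>I in auto)
  also have "\<dots> \<le> Kgrade_gens A xs A_mod" using Kgrade_gens_amalg[OF xs_A] by simp
  also have "\<dots> \<le> Kgrade A I A_mod" unfolding Kgrade_def by (rule SUP_upper) (use xs_I in simp)
  finally show "Kgrade_gens AJ ys AJ_mod \<le> Kgrade A I A_mod" .
qed

lemma Kgrade_le_amalg_ext:
  assumes I: "ideal I A"
    and H: "\<And>xs. set xs \<subseteq> I \<Longrightarrow> Kgrade_gens A xs A_mod \<le> Kgrade A (Idl\<^bsub>A\<^esub> (set xs)) J_mod"
  shows "Kgrade A I A_mod \<le> Kgrade AJ (amalg_ext A B f J I) AJ_mod"
  unfolding Kgrade_def[of A I]
proof (rule SUP_least)
  have I_A: "I \<subseteq> carrier A" using ideal.Icarr[OF I] by blast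
  fix xs assume "xs \<in> {xs. set xs \<subseteq> I}"
  then have xs_I: "set xs \<subseteq> I" and xs_A: "set xs \<subseteq> carrier A" using I_A by auto
  show "Kgrade_gens A xs A_mod \<le> Kgrade AJ (amalg_ext A B f J I) AJ_mod"
  proof (rule enat_le_if_all_nat_le)
    fix n assume n: "enat n \<le> Kgrade_gens A xs A_mod"
    have "\<exists>v. set v \<subseteq> Idl\<^bsub>A\<^esub> (set xs) \<and> enat n \<le> Kgrade_gens A v J_mod"
    proof (cases n)
      case 0
      then show ?thesis by (intro exI[of _ "[]"]) (simp add: zero_enat_def[symmetric])
    next
      case (Suc m)
      then have "enat m < Kgrade_gens A xs A_mod" using n Suc_ile_eq[of m "Kgrade_gens A xs A_mod"] by simp
      also have "\<dots> \<le> Kgrade A (Idl\<^bsub>A\<^esub> (set xs)) J_mod" by (rule H[OF xs_I])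
      finally obtain v where "set v \<subseteq> Idl\<^bsub>A\<^esub> (set xs)" "enat m < Kgrade_gens A v J_mod"
        by (auto simp: Kgrade_def less_SUP_iff)
      then show ?thesis using Suc Suc_ile_eq[of m "Kgrade_gens A v J_mod"] by auto
    qed
    then obtain v where v: "set v \<subseteq> Idl\<^bsub>A\<^esub> (set xs)" "enat n \<le> Kgrade_gens A v J_mod" by blast
    have v_I: "set v \<subseteq> I" using v(1) R.genideal_minimal[OF I xs_I] by blast
    then have v_A: "set v \<subseteq> carrier A" using I_A by blast
    have "enat n \<le> Kgrade_gens A (xs @ v) A_mod"
      using n module.Kgrade_gens_le_append_right[OF module_self_module[OF R.is_cring] xs_A v_A] by simp
    moreover have "enat n \<le> Kgrade_gens A (xs @ v) J_mod"
      using v(2) module.Kgrade_gens_le_append_left[OF module_J_mod xs_A v_A] by simp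
    ultimately have "enat n \<le> Kgrade_gens AJ (map \<iota> (xs @ v)) AJ_mod"
      using Kgrade_gens_amalg[of "xs @ v"] xs_A v_A by simp
    also have "\<dots> \<le> Kgrade AJ (amalg_ext A B f J I) AJ_mod"
      unfolding Kgrade_def by (rule SUP_upper) (use iota_image_subset_amalg_ext[OF I_A] xs_I v_I in auto)
    finally show "enat n \<le> Kgrade AJ (amalg_ext A B f J I) AJ_mod" .
  qed
qed

text \<open>The argument only uses that the class \<open>C\<close> consists of ideals and contains the
  ideals generated by finite lists, so both parts of the theorem are instances.\<close>

lemma Kgrade_amalg_ext_eq:
  assumes C_ideal: "\<And>I. C I \<Longrightarrow> ideal I A"
    and C_genideal: "\<And>xs. set xs \<subseteq> carrier A \<Longrightarrow> C (Idl\<^bsub>A\<^esub> (set xs))"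
  shows "CM_in_sense A C \<and> (\<forall>I. C I \<longrightarrow> Kgrade A I J_mod \<ge> height A I)
    \<longrightarrow> (\<forall>I. C I \<longrightarrow> Kgrade AJ (amalg_ext A B f J I) AJ_mod = Kgrade A I A_mod
                   \<and> Kgrade A I A_mod \<le> Kgrade A I J_mod)"
proof (intro impI allI)
  fix I assume hyp: "CM_in_sense A C \<and> (\<forall>I. C I \<longrightarrow> Kgrade A I J_mod \<ge> height A I)" and CI: "C I"
  have ht: "height A I' = Kgrade A I' A_mod" "height A I' \<le> Kgrade A I' J_mod" if "C I'" for I'
    using that hyp by (auto simp: CM_in_sense_def)
  have I: "ideal I A" by (rule C_ideal[OF CI])
  then have I_A: "I \<subseteq> carrier A" using ideal.Icarr[OF I] by blast
  have "Kgrade_gens A xs A_mod \<le> Kgrade A (Idl\<^bsub>A\<^esub> (set xs)) J_mod" if "set xs \<subseteq> I" for xs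
  proof -
    have xs_A: "set xs \<subseteq> carrier A" using that I_A by blast
    have "Kgrade_gens A xs A_mod \<le> Kgrade A (Idl\<^bsub>A\<^esub> (set xs)) A_mod"
      unfolding Kgrade_def by (rule SUP_upper) (use R.genideal_self[OF xs_A] in simp)
    then show ?thesis using ht[OF C_genideal[OF xs_A]] by simp
  qed
  then have "Kgrade A I A_mod \<le> Kgrade AJ (amalg_ext A B f J I) AJ_mod" by (rule Kgrade_le_amalg_ext[OF I])
  with Kgrade_amalg_ext_le[OF I_A] have "Kgrade AJ (amalg_ext A B f J I) AJ_mod = Kgrade A I A_mod"
    by (rule antisym)
  moreover have "Kgrade A I A_mod \<le> Kgrade A I J_mod" using ht[OF CI] by simp
  ultimately show "Kgrade AJ (amalg_ext A B f J I) AJ_mod = Kgrade A I A_mod \<and> Kgrade A I A_mod \<le> Kgrade A I J_mod"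
    by simp
qed

end

theorem lemma3p2:
  fixes A :: "('a, 'c) ring_scheme" and B :: "('b, 'd) ring_scheme"
    and f :: "'a \<Rightarrow> 'b" and J :: "'b set"
  assumes "cring A" and "cring B" and "f \<in> ring_hom A B" and "ideal J B"
  shows
   "(CM_in_sense A (\<lambda>I. ideal I A) \<and>
     (\<forall>I. ideal I A \<longrightarrow> Kgrade A I (ideal_module_via A B f J) \<ge> height A I)
     \<longrightarrow> (\<forall>I. ideal I A \<longrightarrow>
           Kgrade (amalgamation A B f J) (amalg_ext A B f J I) (self_module (amalgamation A B f J))
             = Kgrade A I (self_module A)
         \<and> Kgrade A I (self_module A) \<le> Kgrade A I (ideal_module_via A B f J)))
  \<and> (CM_in_sense A (finitely_generated_ideal A) \<and>
     (\<forall>I. finitely_generated_ideal A I \<longrightarrow> Kgrade A I (ideal_module_via A B f J) \<ge> height A I)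
     \<longrightarrow> (\<forall>I. finitely_generated_ideal A I \<longrightarrow>
           Kgrade (amalgamation A B f J) (amalg_ext A B f J I) (self_module (amalgamation A B f J))
             = Kgrade A I (self_module A)
         \<and> Kgrade A I (self_module A) \<le> Kgrade A I (ideal_module_via A B f J)))"
proof -
  interpret amalg A B f J
    by (intro amalg.intro ring_hom_cring.intro ring_hom_cring_axioms.intro amalg_axioms.intro assms)
  have fg: "finitely_generated_ideal A (Idl\<^bsub>A\<^esub> (set xs))" if "set xs \<subseteq> carrier A" for xs
    unfolding finitely_generated_ideal_def using R.genideal_ideal[OF that] that by blast
  have fg_ideal: "ideal I A" if "finitely_generated_ideal A I" for I
    using that by (simp add: finitely_generated_ideal_def)
  have ideals: "ideal I A \<Longrightarrow> ideal I A" for I .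
  show ?thesis
    using Kgrade_amalg_ext_eq[of "\<lambda>I. ideal I A", OF ideals R.genideal_ideal]
      Kgrade_amalg_ext_eq[of "finitely_generated_ideal A", OF fg_ideal fg]
    by (rule conjI)
qed

end
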